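(* Let $G$ be a connected groupoid with finite object set $G_0=\{e_1,\dots,e_r\}$, $A=\bigoplus_{i=1}^r A_i$ a unital ring with $A_i:=A_{e_i}\neq 0$ having identity $1_i$, and $\alpha=(A_g,\alpha_g)_{g\in G}$ a unital global action of $G$ on $A$. The following are equivalent: (i) $A\subset A\star_\alpha G$ is a separable extension; (ii) $G$ is finite and there exist $a\in C(A)$ and $k\in\{1,\dots,r\}$ such that $t_k(a)=1_k$.
   Context: A groupoid $G$ is a small category in which every morphism is invertible; $G_0$ is its object set (objects identified with identity morphisms), $s,t$ source and target; $gh$ is defined iff $s(g)=t(h)$; $G(e,f)$ is the set of morphisms from $e$ to $f$; $G$ is connected if $G(e,f)\neq\emptyset$ for all $e,f\in G_0$. A unital partial action of $G$ on $A$ is a family $\alpha=(A_g,\alpha_g)_{g\in G}$ where $A_{t(g)}$ is a two-sided ideal of $A$, $A_g=A1_g$ is a two-sided ideal of $A_{t(g)}$ with $1_g$ a central idempotent of $A$, $\alpha_g:A_{g^{-1}}\to A_g$ a ring isomorphism, such that $\alpha_e=\mathrm{id}_{A_e}$ for $e\in G_0$, $\alpha_h^{-1}(A_{g^{-1}}\cap A_h)\subseteq A_{(gh)^{-1}}$ and $\alpha_g(\alpha_h(x))=\alpha_{gh}(x)$ for $x\in\alpha_h^{-1}(A_{g^{-1}}\cap A_h)$, whenever $s(g)=t(h)$. It is global if $\alpha_g\alpha_h=\alpha_{gh}$ for all composable $g,h$; equivalently $A_g=A_{t(g)}$ for all $g\in G$. The skew groupoid ring $A\star_\alpha G=\bigoplus_{g\in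 G}A_g\delta_g$ has multiplication $(a_g\delta_g)(b_h\delta_h)=\alpha_g(\alpha_{g^{-1}}(a_g)b_h)\delta_{gh}$ if $s(g)=t(h)$ and $0$ otherwise; it is unital with $1=\sum_{e\in G_0}1_e\delta_e$, and $A$ is regarded as a subring via $a\mapsto\sum_{e\in G_0}(a1_e)\delta_e$. For finite $G$, trace maps: $t_{i,j}(a)=\sum_{g\in G(e_i,e_j)}\alpha_g(a1_{g^{-1}})$ and $t_j(a)=\sum_{i=1}^r t_{i,j}(a)$. $C(A)$ is the center of $A$. A ring extension $R\subseteq S$ is separable if the multiplication map $S\otimes_R S\to S$ splits as a map of $(S,S)$-bimodules; equivalently there exists $x\in S\otimes_R S$ with $m(x)=1_S$ and $sx=xs$ for all $s\in S$. *)

theory Defs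
  imports Main "HOL-Library.FuncSet"
begin

record 'g groupoid =
  mor  :: "'g set"
  src  :: "'g \<Rightarrow> 'g"
  tgt  :: "'g \<Rightarrow> 'g"
  comp :: "'g \<Rightarrow> 'g \<Rightarrow> 'g"

definition groupoid :: "('g, 'x) groupoid_scheme \<Rightarrow> bool" where
  "groupoid G \<longleftrightarrow>
     (\<forall>g\<in>mor G. src G g \<in> mor G \<and> tgt G g \<in> mor G \<and>
        src G (src G g) = src G g \<and> tgt G (src G g) = src G g \<and>
        src G (tgt G g) = tgt G g \<and> tgt G (tgt G g) = tgt G g) \<and>
     (\<forall>g\<in>mor G. \<forall>h\<in>mor G. src G g = tgt G h \<longrightarrow>
        comp G g h \<in> mor G \<and> src G (comp G g h) = src G h \<and> tgt G (comp G g h) = tgt G g) \<and>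
     (\<forall>f\<in>mor G. \<forall>g\<in>mor G. \<forall>h\<in>mor G. src G f = tgt G g \<and> src G g = tgt G h \<longrightarrow>
        comp G (comp G f g) h = comp G f (comp G g h)) \<and>
     (\<forall>g\<in>mor G. comp G (tgt G g) g = g \<and> comp G g (src G g) = g) \<and>
     (\<forall>g\<in>mor G. \<exists>h\<in>mor G. src G h = tgt G g \<and> tgt G h = src G g \<and>
        comp G g h = tgt G g \<and> comp G h g = src G g)"

text \<open>The object set G_0 (objects = identity morphisms).\<close>
definition objs :: "('g, 'x) groupoid_scheme \<Rightarrow> 'g set" where
  "objs G = src G ` mor G"

definition hom :: "('g, 'x) groupoid_scheme \<Rightarrow> 'g \<Rightarrow> 'g \<Rightarrow> 'g set" where
  "hom G e f = {g \<in> mor G. src G g = e \<and> tgt G g = f}"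

definition connected_groupoid :: "('g, 'x) groupoid_scheme \<Rightarrow> bool" where
  "connected_groupoid G \<longleftrightarrow> (\<forall>e\<in>objs G. \<forall>f\<in>objs G. hom G e f \<noteq> {})"

definition ginv :: "('g, 'x) groupoid_scheme \<Rightarrow> 'g \<Rightarrow> 'g" where
  "ginv G g = (SOME h. h \<in> mor G \<and> src G h = tgt G g \<and> tgt G h = src G g \<and>
                 comp G g h = tgt G g \<and> comp G h g = src G g)"

text \<open>\<iota> e is the central idempotent 1_e; the ideal A_e = A 1_e.\<close>
definition ideal_at :: "('g \<Rightarrow> 'a::ring_1) \<Rightarrow> 'g \<Rightarrow> 'a set" where
  "ideal_at \<iota> e = range (\<lambda>a. a * \<iota> e)"

definition center :: "'a::ring_1 set" where
  "center = {a. \<forall>b. a * b = b * a}"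

definition direct_sum_decomp :: "('g, 'x) groupoid_scheme \<Rightarrow> ('g \<Rightarrow> 'a::ring_1) \<Rightarrow> bool" where
  "direct_sum_decomp G \<iota> \<longleftrightarrow>
     (\<forall>a. \<exists>!f. f \<in> (\<Pi>\<^sub>E e\<in>objs G. ideal_at \<iota> e) \<and> a = (\<Sum>e\<in>objs G. f e))"

text \<open>Unital global action: A_g = A_{t(g)} = A 1_{t(g)}, with 1_e central idempotents,
  alpha_g : A_{g^-1} = A_{s(g)} \<rightarrow> A_g = A_{t(g)} a ring isomorphism, alpha_e = id,
  alpha_g alpha_h = alpha_{gh}.\<close>
definition global_action ::
    "('g, 'x) groupoid_scheme \<Rightarrow> ('g \<Rightarrow> 'a::ring_1) \<Rightarrow> ('g \<Rightarrow> 'a \<Rightarrow> 'a) \<Rightarrow> bool" where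
  "global_action G \<iota> \<alpha> \<longleftrightarrow>
     (\<forall>e\<in>objs G. \<iota> e * \<iota> e = \<iota> e \<and> \<iota> e \<in> center) \<and>
     (\<forall>g\<in>mor G. bij_betw (\<alpha> g) (ideal_at \<iota> (src G g)) (ideal_at \<iota> (tgt G g)) \<and>
        (\<forall>x\<in>ideal_at \<iota> (src G g). \<forall>y\<in>ideal_at \<iota> (src G g).
           \<alpha> g (x + y) = \<alpha> g x + \<alpha> g y \<and> \<alpha> g (x * y) = \<alpha> g x * \<alpha> g y)) \<and>
     (\<forall>e\<in>objs G. \<forall>x\<in>ideal_at \<iota> e. \<alpha> e x = x) \<and>
     (\<forall>g\<in>mor G. \<forall>h\<in>mor G. src G g = tgt G h \<longrightarrow>
        (\<forall>x\<in>ideal_at \<iota> (src G h). \<alpha> g (\<alpha> h x) = \<alpha> (comp G g h) x))"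

section \<open>Trace maps (global case: 1_{g^-1} = 1_{s(g)})\<close>

definition trace_ij ::
    "('g, 'x) groupoid_scheme \<Rightarrow> ('g \<Rightarrow> 'a::ring_1) \<Rightarrow> ('g \<Rightarrow> 'a \<Rightarrow> 'a) \<Rightarrow> 'g \<Rightarrow> 'g \<Rightarrow> 'a \<Rightarrow> 'a" where
  "trace_ij G \<iota> \<alpha> ei ej a = (\<Sum>g\<in>hom G ei ej. \<alpha> g (a * \<iota> (src G g)))"

definition trace_j ::
    "('g, 'x) groupoid_scheme \<Rightarrow> ('g \<Rightarrow> 'a::ring_1) \<Rightarrow> ('g \<Rightarrow> 'a \<Rightarrow> 'a) \<Rightarrow> 'g \<Rightarrow> 'a \<Rightarrow> 'a" where
  "trace_j G \<iota> \<alpha> ej a = (\<Sum>ei\<in>objs G. trace_ij G \<iota> \<alpha> ei ej a)"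

section \<open>The skew groupoid ring, as finitely supported functions g \<mapsto> a_g \<in> A_g\<close>

definition skew_carrier :: "('g, 'x) groupoid_scheme \<Rightarrow> ('g \<Rightarrow> 'a::ring_1) \<Rightarrow> ('g \<Rightarrow> 'a) set" where
  "skew_carrier G \<iota> = {u. (\<forall>g. g \<notin> mor G \<longrightarrow> u g = 0) \<and> finite {g. u g \<noteq> 0} \<and>
                          (\<forall>g\<in>mor G. u g \<in> ideal_at \<iota> (tgt G g))}"

definition skew_add :: "('g \<Rightarrow> 'a::ring_1) \<Rightarrow> ('g \<Rightarrow> 'a) \<Rightarrow> ('g \<Rightarrow> 'a)" where
  "skew_add u v = (\<lambda>g. u g + v g)"

text \<open>(a_g delta_g)(b_h delta_h) = alpha_g(alpha_{g^-1}(a_g) b_h) delta_{gh} if s(g)=t(h), else 0.\<close>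
definition skew_mult ::
    "('g, 'x) groupoid_scheme \<Rightarrow> ('g \<Rightarrow> 'a::ring_1 \<Rightarrow> 'a) \<Rightarrow> ('g \<Rightarrow> 'a) \<Rightarrow> ('g \<Rightarrow> 'a) \<Rightarrow> ('g \<Rightarrow> 'a)" where
  "skew_mult G \<alpha> u v = (\<lambda>k. \<Sum>p\<in>{(g, h). g \<in> mor G \<and> h \<in> mor G \<and> u g \<noteq> 0 \<and> v h \<noteq> 0 \<and>
                                       src G g = tgt G h \<and> comp G g h = k}.
        \<alpha> (fst p) (\<alpha> (ginv G (fst p)) (u (fst p)) * v (snd p)))"

definition skew_one :: "('g, 'x) groupoid_scheme \<Rightarrow> ('g \<Rightarrow> 'a::ring_1) \<Rightarrow> ('g \<Rightarrow> 'a)" where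
  "skew_one G \<iota> = (\<lambda>g. if g \<in> objs G then \<iota> g else 0)"

definition skew_emb :: "('g, 'x) groupoid_scheme \<Rightarrow> ('g \<Rightarrow> 'a::ring_1) \<Rightarrow> 'a \<Rightarrow> ('g \<Rightarrow> 'a)" where
  "skew_emb G \<iota> a = (\<lambda>g. if g \<in> objs G then a * \<iota> g else 0)"

text \<open>S \<otimes>_R S is the free abelian group on S \<times> S modulo the subgroup generated by
  the biadditivity and R-balancedness relations.\<close>
definition tdelta :: "'s \<times> 's \<Rightarrow> ('s \<times> 's \<Rightarrow> int)" where
  "tdelta p = (\<lambda>q. if q = p then 1 else 0)"

definition tensor_gens ::
    "'s set \<Rightarrow> ('s \<Rightarrow> 's \<Rightarrow> 's) \<Rightarrow> ('s \<Rightarrow> 's \<Rightarrow> 's) \<Rightarrow> 's set \<Rightarrow> ('s \<times> 's \<Rightarrow> int) set" where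
  "tensor_gens S add mult R =
     {(\<lambda>q. tdelta (add u u', v) q - tdelta (u, v) q - tdelta (u', v) q) | u u' v.
         u \<in> S \<and> u' \<in> S \<and> v \<in> S} \<union>
     {(\<lambda>q. tdelta (u, add v v') q - tdelta (u, v) q - tdelta (u, v') q) | u v v'.
         u \<in> S \<and> v \<in> S \<and> v' \<in> S} \<union>
     {(\<lambda>q. tdelta (mult u r, v) q - tdelta (u, mult r v) q) | u r v.
         u \<in> S \<and> r \<in> R \<and> v \<in> S}"

inductive_set tensor_null ::
    "'s set \<Rightarrow> ('s \<Rightarrow> 's \<Rightarrow> 's) \<Rightarrow> ('s \<Rightarrow> 's \<Rightarrow> 's) \<Rightarrow> 's set \<Rightarrow> ('s \<times> 's \<Rightarrow> int) set"
  for S add mult R where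
    zero: "(\<lambda>_. 0) \<in> tensor_null S add mult R"
  | plus: "z \<in> tensor_null S add mult R \<Longrightarrow> w \<in> tensor_gens S add mult R \<Longrightarrow>
           (\<lambda>q. z q + w q) \<in> tensor_null S add mult R"
  | minus: "z \<in> tensor_null S add mult R \<Longrightarrow> w \<in> tensor_gens S add mult R \<Longrightarrow>
           (\<lambda>q. z q - w q) \<in> tensor_null S add mult R"

text \<open>A list xs of pairs (u_i, v_i) represents the tensor sum_i u_i \<otimes> v_i
  (every element of S \<otimes>_R S has this form).\<close>
definition formal_sum :: "('s \<times> 's) list \<Rightarrow> ('s \<times> 's \<Rightarrow> int)" where
  "formal_sum xs = (\<lambda>q. int (count_list xs q))"

text \<open>R \<subseteq> S separable: there is x in S \<otimes>_R S with m(x) = 1 and s x = x s for all s.\<close>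
definition separable_ext ::
    "'s set \<Rightarrow> ('s \<Rightarrow> 's \<Rightarrow> 's) \<Rightarrow> ('s \<Rightarrow> 's \<Rightarrow> 's) \<Rightarrow> 's \<Rightarrow> 's \<Rightarrow> 's set \<Rightarrow> bool" where
  "separable_ext S add mult zero one R \<longleftrightarrow>
     (\<exists>xs. set xs \<subseteq> S \<times> S \<and>
        foldr (\<lambda>p acc. add (mult (fst p) (snd p)) acc) xs zero = one \<and>
        (\<forall>s\<in>S. (\<lambda>q. formal_sum (map (\<lambda>p. (mult s (fst p), snd p)) xs) q
                  - formal_sum (map (\<lambda>p. (fst p, mult (snd p) s)) xs) q)
               \<in> tensor_null S add mult R))"

end

theory Submission
  imports Defs "HOL-Library.Function_Algebras"
begin

(* Test a separability element x = sum_i x_i (x) y_i against the maps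
   x (x) y |-> alpha_{g^-1}(x_g) y_k: they are biadditive and A-balanced, so the relations
   u x = x u hold coefficientwise.  For u in A they show that c_e = sum_i (x_i)_e (y_i)_e is
   central; for u = 1 delta_h they show that the (g, g^-1) coefficient is c_{s(g)}.  Hence
   m(x) = 1 reads 1_e = sum_{t(g) = e} alpha_g(c_{s(g)}), i.e. t_e(sum_f c_f) = 1_e.  Some c_f
   is nonzero because the A_e are, so every morphism ending in f has its inverse in the finite
   support of some x_i, and connectedness makes G finite.
   Conversely, connectedness carries t_k(a) = 1_k to every object, so
   sum_g alpha_g(a 1_{g^-1}) delta_g (x) 1_{g^-1} delta_{g^-1} multiplies to
   sum_e t_e(a) delta_e = 1.  By additivity it commutes with all of A * G once it commutes with
   each monomial b delta_h, and there the terms match after reindexing g |-> h^-1 g. *)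

locale groupoid_struct =
  fixes G :: "('g, 'x) groupoid_scheme"
  assumes groupoid: "groupoid G"
begin

abbreviation "M \<equiv> mor G"
abbreviation "s \<equiv> src G"
abbreviation "t \<equiv> tgt G"
abbreviation "cp \<equiv> comp G"
abbreviation "iv \<equiv> ginv G"

lemma src_tgt_simps [simp]:
  assumes "g \<in> M"
  shows "s g \<in> M" "t g \<in> M" "s (s g) = s g" "t (s g) = s g" "s (t g) = t g" "t (t g) = t g"
  using groupoid assms unfolding groupoid_def by blast+

lemma comp_simps [simp]:
  assumes "g \<in> M" "h \<in> M" "s g = t h"
  shows "cp g h \<in> M" "s (cp g h) = s h" "t (cp g h) = t g"
  using groupoid assms unfolding groupoid_def by blast+

lemma comp_assoc:
  assumes "f \<in> M" "g \<in> M" "h \<in> M" "s f = t g" "s g = t h"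
  shows "cp (cp f g) h = cp f (cp g h)"
  using groupoid assms unfolding groupoid_def by blast

lemma comp_tgt_left [simp]: "g \<in> M \<Longrightarrow> cp (t g) g = g"
  and comp_src_right [simp]: "g \<in> M \<Longrightarrow> cp g (s g) = g"
  using groupoid unfolding groupoid_def by blast+

lemma ginv_simps [simp]:
  assumes "g \<in> M"
  shows "iv g \<in> M" "s (iv g) = t g" "t (iv g) = s g" "cp g (iv g) = t g" "cp (iv g) g = s g"
proof -
  from groupoid assms obtain h where "h \<in> M \<and> s h = t g \<and> t h = s g \<and> cp g h = t g \<and> cp h g = s g"
    unfolding groupoid_def by blast
  then have "iv g \<in> M \<and> s (iv g) = t g \<and> t (iv g) = s g \<and> cp g (iv g) = t g \<and> cp (iv g) g = s g"
    unfolding ginv_def by (rule someI)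
  then show "iv g \<in> M" "s (iv g) = t g" "t (iv g) = s g" "cp g (iv g) = t g" "cp (iv g) g = s g"
    by auto
qed

lemma ginv_comp_tgt [simp]: "g \<in> M \<Longrightarrow> cp (iv g) (t g) = iv g"
  using comp_src_right[of "iv g"] by simp

lemma ginv_comp_cancel_left:
  assumes "g \<in> M" "h \<in> M" "s g = t h"
  shows "cp (iv g) (cp g h) = h"
  using assms comp_assoc[of "iv g" g h] by simp

lemma comp_ginv_cancel_left:
  assumes "g \<in> M" "h \<in> M" "t g = t h"
  shows "cp g (cp (iv g) h) = h"
  using assms comp_assoc[of g "iv g" h] by simp

lemma comp_ginv_cancel_right:
  assumes "g \<in> M" "h \<in> M" "s g = t h"
  shows "cp (cp g h) (iv h) = g"
  using assms comp_assoc[of g h "iv h"] comp_src_right[of g] by simp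

lemma ginv_comp_cancel_right:
  assumes "g \<in> M" "h \<in> M" "s g = s h"
  shows "cp (cp g (iv h)) h = g"
  using assms comp_assoc[of g "iv h" h] comp_src_right[of g] by simp

lemma ginv_unique:
  assumes "g \<in> M" "h \<in> M" "s g = t h" "cp g h = t g"
  shows "h = iv g"
  using ginv_comp_cancel_left[OF assms(1-3)] assms comp_src_right[of "iv g"] by simp

lemma ginv_ginv [simp]: "g \<in> M \<Longrightarrow> iv (iv g) = g"
  using ginv_unique[of "iv g" g] by simp

lemma ginv_ginv_comp:
  assumes "h \<in> M" "g \<in> M" "t g = t h"
  shows "iv (cp (iv h) g) = cp (iv g) h"
proof -
  have "cp (cp (iv h) g) (cp (iv g) h) = cp (iv h) h"
    using assms comp_assoc[of "iv h" g "cp (iv g) h"] comp_ginv_cancel_left[of g h] by simp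
  then show ?thesis
    using assms ginv_unique[of "cp (iv h) g" "cp (iv g) h"] by simp
qed

lemma ginv_comp_eq_iff:
  assumes "g \<in> M" "h \<in> M" "k \<in> M" "t g = t k"
  shows "cp (iv g) k = h \<longleftrightarrow> s g = t h \<and> k = cp g h"
proof
  assume "cp (iv g) k = h"
  then show "s g = t h \<and> k = cp g h"
    using assms comp_ginv_cancel_left[of g k] by auto
qed (use assms ginv_comp_cancel_left[of g h] in auto)

lemma comp_eq_iff_ginv:
  assumes "g \<in> M" "h \<in> M" "k \<in> M"
  shows "s g = t h \<and> k = cp g h \<longleftrightarrow> s k = s h \<and> g = cp k (iv h)"
proof
  assume "s g = t h \<and> k = cp g h"
  then show "s k = s h \<and> g = cp k (iv h)"
    using assms comp_ginv_cancel_right[of g h] by auto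
qed (use assms ginv_comp_cancel_right[of k h] in auto)

lemma objs_iff: "e \<in> objs G \<longleftrightarrow> e \<in> M \<and> s e = e"
  unfolding objs_def by (metis (no_types, lifting) image_iff src_tgt_simps(1) src_tgt_simps(3))

lemma obj_mor: "e \<in> objs G \<Longrightarrow> e \<in> M"
  and obj_src: "e \<in> objs G \<Longrightarrow> s e = e"
  and obj_tgt: "e \<in> objs G \<Longrightarrow> t e = e"
  unfolding objs_iff by (metis src_tgt_simps(4))+

lemma src_obj: "g \<in> M \<Longrightarrow> s g \<in> objs G"
  and tgt_obj: "g \<in> M \<Longrightarrow> t g \<in> objs G"
  by (auto simp: objs_iff)

lemma ginv_obj: "e \<in> objs G \<Longrightarrow> iv e = e"
  using ginv_unique[of e e] obj_mor obj_src obj_tgt comp_tgt_left by metis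

lemma finite_mor_if_finite_fibre:
  assumes "connected_groupoid G" "f \<in> objs G" "finite {h \<in> M. t h = f}"
  shows "finite M"
proof (rule finite_subset)
  let ?T = "{h \<in> M. t h = f}"
  show "M \<subseteq> (\<lambda>(a, b). cp (iv a) b) ` (?T \<times> ?T)"
  proof
    fix g assume g: "g \<in> M"
    then obtain k where k: "k \<in> M" "s k = t g" "t k = f"
      using assms(1,2) tgt_obj[OF g] unfolding connected_groupoid_def hom_def by blast
    then have "g = cp (iv k) (cp k g)" "cp k g \<in> ?T"
      using ginv_comp_cancel_left[OF k(1) g k(2)] g by simp_all
    then show "g \<in> (\<lambda>(a, b). cp (iv a) b) ` (?T \<times> ?T)" using k by force
  qed
qed (use assms(3) in simp)

end

lemma center_sum: "(\<And>i. i \<in> I \<Longrightarrow> f i \<in> center) \<Longrightarrow> sum f I \<in> center"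
  by (induction I rule: infinite_finite_induct) (auto simp: center_def distrib_left distrib_right)

locale global_groupoid_action = groupoid_struct G for G :: "('g, 'x) groupoid_scheme" +
  fixes \<iota> :: "'g \<Rightarrow> 'a::ring_1" and \<alpha> :: "'g \<Rightarrow> 'a \<Rightarrow> 'a"
  assumes global_action: "global_action G \<iota> \<alpha>"
    and direct_sum: "direct_sum_decomp G \<iota>"
    and finite_objs: "finite (objs G)"
begin

abbreviation "A e \<equiv> ideal_at \<iota> e"
abbreviation "Ob \<equiv> objs G"

lemma unit_idem: "e \<in> Ob \<Longrightarrow> \<iota> e * \<iota> e = \<iota> e"
  using global_action unfolding global_action_def by blast

lemma unit_central: "e \<in> Ob \<Longrightarrow> \<iota> e * x = x * \<iota> e"
  using global_action unfolding global_action_def center_def by blast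

lemma ideal_at_iff: "e \<in> Ob \<Longrightarrow> x \<in> A e \<longleftrightarrow> x * \<iota> e = x"
  unfolding ideal_at_def using unit_idem by (auto simp: mult.assoc) (metis rangeI)

lemma unit_mult_ideal: "e \<in> Ob \<Longrightarrow> x \<in> A e \<Longrightarrow> \<iota> e * x = x"
  using ideal_at_iff unit_central by metis

lemma ideal_zero: "e \<in> Ob \<Longrightarrow> 0 \<in> A e"
  by (simp add: ideal_at_iff)

lemma ideal_unit: "e \<in> Ob \<Longrightarrow> \<iota> e \<in> A e"
  by (simp add: ideal_at_iff unit_idem)

lemma ideal_add: "e \<in> Ob \<Longrightarrow> x \<in> A e \<Longrightarrow> y \<in> A e \<Longrightarrow> x + y \<in> A e"
  by (simp add: ideal_at_iff distrib_right)

lemma ideal_mult_left: "e \<in> Ob \<Longrightarrow> x \<in> A e \<Longrightarrow> y * x \<in> A e"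
  by (simp add: ideal_at_iff mult.assoc)

lemma ideal_mult_right: "e \<in> Ob \<Longrightarrow> x \<in> A e \<Longrightarrow> x * y \<in> A e"
  using ideal_at_iff unit_central by (metis mult.assoc)

lemma times_unit_ideal: "e \<in> Ob \<Longrightarrow> x * \<iota> e \<in> A e"
  by (simp add: ideal_unit ideal_mult_left)

lemma ideal_sum: "e \<in> Ob \<Longrightarrow> (\<And>i. i \<in> I \<Longrightarrow> f i \<in> A e) \<Longrightarrow> sum f I \<in> A e"
  by (induction I rule: infinite_finite_induct) (auto simp: ideal_zero ideal_add)

lemma ideal_sum_list: "e \<in> Ob \<Longrightarrow> (\<And>p. p \<in> set xs \<Longrightarrow> f p \<in> A e) \<Longrightarrow> (\<Sum>p\<leftarrow>xs. f p) \<in> A e"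
  by (induction xs) (auto simp: ideal_zero ideal_add)

lemma units_orthogonal:
  assumes e: "e \<in> Ob" and f: "f \<in> Ob" and "e \<noteq> f"
  shows "\<iota> e * \<iota> f = 0"
proof -
  let ?y = "\<iota> e * \<iota> f"
  define c where "c d = (\<lambda>e'\<in>Ob. if e' = d then ?y else 0)" for d
  have y: "?y \<in> A e" "?y \<in> A f"
    using ideal_mult_right[OF e ideal_unit[OF e]] ideal_mult_left[OF f ideal_unit[OF f]] by auto
  have decomp: "c d \<in> (\<Pi>\<^sub>E e\<in>Ob. A e) \<and> ?y = (\<Sum>e'\<in>Ob. c d e')" if "d \<in> Ob" "?y \<in> A d" for d
  proof
    show "c d \<in> (\<Pi>\<^sub>E e\<in>Ob. A e)" using that ideal_zero by (auto simp: c_def)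
    show "?y = (\<Sum>e'\<in>Ob. c d e')" using that finite_objs by (simp add: c_def)
  qed
  obtain c0 where "\<And>c'. c' \<in> (\<Pi>\<^sub>E e\<in>Ob. A e) \<and> ?y = (\<Sum>e'\<in>Ob. c' e') \<Longrightarrow> c' = c0"
    using direct_sum unfolding direct_sum_decomp_def by metis
  then have "c e = c f"
    using decomp[OF e y(1)] decomp[OF f y(2)] by metis
  then have "c e e = c f e" by simp
  then show ?thesis
    using \<open>e \<noteq> f\<close> e unfolding c_def by simp
qed

lemma ideal_times_other_unit:
  assumes "e \<in> Ob" "f \<in> Ob" "e \<noteq> f" "x \<in> A e"
  shows "x * \<iota> f = 0"
proof -
  have "x * \<iota> f = x * (\<iota> e * \<iota> f)"
    using assms(1,4) ideal_at_iff by (metis mult.assoc)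
  then show ?thesis using units_orthogonal[OF assms(1-3)] by simp
qed

lemma objs_nonempty: "Ob \<noteq> {}"
proof
  assume "Ob = {}"
  with direct_sum have "\<exists>!c. c \<in> (\<Pi>\<^sub>E e\<in>Ob. A e) \<and> (1::'a) = (\<Sum>e\<in>Ob. c e)"
    unfolding direct_sum_decomp_def by blast
  with \<open>Ob = {}\<close> show False by auto
qed

lemma central_if_commutes_in_ideal:
  assumes e: "e \<in> Ob" and y: "y \<in> A e" and comm: "\<And>b. b \<in> A e \<Longrightarrow> b * y = y * b"
  shows "y \<in> center"
  unfolding center_def
proof clarify
  fix b
  have "y * b = y * \<iota> e * b" using ideal_at_iff[OF e] y by simp
  also have "\<dots> = y * (b * \<iota> e)" using unit_central[OF e] by (simp add: mult.assoc)
  also have "\<dots> = (b * \<iota> e) * y" using comm[of "b * \<iota> e"] times_unit_ideal[OF e] by simp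
  also have "\<dots> = b * y" using unit_mult_ideal[OF e y] by (simp add: mult.assoc)
  finally show "y * b = b * y" .
qed

lemma act_maps: "g \<in> M \<Longrightarrow> x \<in> A (s g) \<Longrightarrow> \<alpha> g x \<in> A (t g)"
  using global_action unfolding global_action_def bij_betw_def by blast

lemma act_add: "g \<in> M \<Longrightarrow> x \<in> A (s g) \<Longrightarrow> y \<in> A (s g) \<Longrightarrow> \<alpha> g (x + y) = \<alpha> g x + \<alpha> g y"
  using global_action unfolding global_action_def by blast

lemma act_mult: "g \<in> M \<Longrightarrow> x \<in> A (s g) \<Longrightarrow> y \<in> A (s g) \<Longrightarrow> \<alpha> g (x * y) = \<alpha> g x * \<alpha> g y"
  using global_action unfolding global_action_def by blast

lemma act_obj: "e \<in> Ob \<Longrightarrow> x \<in> A e \<Longrightarrow> \<alpha> e x = x"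
  using global_action unfolding global_action_def by blast

lemma act_comp:
  "g \<in> M \<Longrightarrow> h \<in> M \<Longrightarrow> s g = t h \<Longrightarrow> x \<in> A (s h) \<Longrightarrow> \<alpha> g (\<alpha> h x) = \<alpha> (cp g h) x"
  using global_action unfolding global_action_def by blast

lemma act_zero: "g \<in> M \<Longrightarrow> \<alpha> g 0 = 0"
  using act_add[of g 0 0] ideal_zero[OF src_obj] by simp

lemma act_sum:
  "g \<in> M \<Longrightarrow> (\<And>i. i \<in> I \<Longrightarrow> f i \<in> A (s g)) \<Longrightarrow> \<alpha> g (sum f I) = (\<Sum>i\<in>I. \<alpha> g (f i))"
proof (induction I rule: infinite_finite_induct)
  case (insert i I)
  then show ?case using act_add[of g "f i" "sum f I"] ideal_sum[OF src_obj[of g], of I f] by simp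
qed (auto simp: act_zero)

lemma act_sum_list:
  "g \<in> M \<Longrightarrow> (\<And>p. p \<in> set xs \<Longrightarrow> f p \<in> A (s g)) \<Longrightarrow> \<alpha> g (\<Sum>p\<leftarrow>xs. f p) = (\<Sum>p\<leftarrow>xs. \<alpha> g (f p))"
proof (induction xs)
  case (Cons p xs)
  have "f p \<in> A (s g)" "(\<Sum>p\<leftarrow>xs. f p) \<in> A (s g)"
    using Cons.prems ideal_sum_list[OF src_obj[OF Cons.prems(1)], of xs] by auto
  then show ?case using Cons act_add by simp
qed (simp add: act_zero)

lemma act_ginv_act: "g \<in> M \<Longrightarrow> x \<in> A (s g) \<Longrightarrow> \<alpha> (iv g) (\<alpha> g x) = x"
  using act_comp[of "iv g" g x] act_obj[OF src_obj[of g]] by simp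

lemma act_act_ginv: "g \<in> M \<Longrightarrow> y \<in> A (t g) \<Longrightarrow> \<alpha> g (\<alpha> (iv g) y) = y"
  using act_ginv_act[of "iv g" y] by simp

lemma act_ginv_maps: "g \<in> M \<Longrightarrow> y \<in> A (t g) \<Longrightarrow> \<alpha> (iv g) y \<in> A (s g)"
  using act_maps[of "iv g" y] by simp

lemma act_unit:
  assumes g: "g \<in> M"
  shows "\<alpha> g (\<iota> (s g)) = \<iota> (t g)"
proof -
  have u: "\<iota> (t g) \<in> A (t g)" and v: "\<alpha> (iv g) (\<iota> (t g)) \<in> A (s g)"
    using ideal_unit[OF tgt_obj[OF g]] act_ginv_maps[OF g] by auto
  have "\<iota> (t g) = \<alpha> g (\<iota> (s g) * \<alpha> (iv g) (\<iota> (t g)))"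
    using act_act_ginv[OF g u] unit_mult_ideal[OF src_obj[OF g] v] by simp
  also have "\<dots> = \<alpha> g (\<iota> (s g)) * \<iota> (t g)"
    using act_mult[OF g ideal_unit[OF src_obj[OF g]] v] act_act_ginv[OF g u] by simp
  also have "\<dots> = \<alpha> g (\<iota> (s g))"
    using ideal_at_iff[OF tgt_obj[OF g]] act_maps[OF g ideal_unit[OF src_obj[OF g]]] by simp
  finally show ?thesis by simp
qed

lemma act_central:
  assumes g: "g \<in> M" and a: "a \<in> center"
  shows "\<alpha> g (a * \<iota> (s g)) \<in> center"
proof (rule central_if_commutes_in_ideal[OF tgt_obj[OF g] act_maps[OF g times_unit_ideal[OF src_obj[OF g]]]])
  fix b assume b: "b \<in> A (t g)"
  let ?b = "\<alpha> (iv g) b" and ?a = "a * \<iota> (s g)"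
  have b': "?b \<in> A (s g)" and a': "?a \<in> A (s g)"
    using act_ginv_maps[OF g b] times_unit_ideal[OF src_obj[OF g]] by auto
  have ac: "\<And>z. a * z = z * a" using a unfolding center_def by blast
  have "?b * ?a = a * (?b * \<iota> (s g))" by (simp add: ac mult.assoc flip: mult.assoc[of _ a])
  also have "\<dots> = ?a * ?b" using unit_central[OF src_obj[OF g]] by (simp add: mult.assoc)
  finally have "?b * ?a = ?a * ?b" .
  then show "b * \<alpha> g ?a = \<alpha> g ?a * b"
    using act_mult[OF g b' a'] act_mult[OF g a' b'] act_act_ginv[OF g b] by simp
qed

end

section \<open>The skew groupoid ring\<close>

definition skew_monom :: "'g \<Rightarrow> 'a::zero \<Rightarrow> 'g \<Rightarrow> 'a" where
  "skew_monom g c = (\<lambda>k. if k = g then c else 0)"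

lemma skew_add_eq_plus: "skew_add u v = u + v"
  by (simp add: skew_add_def plus_fun_def)

lemma foldr_skew_add: "foldr (\<lambda>p acc. skew_add (f p) acc) xs (\<lambda>_. 0) = sum_list (map f xs)"
  by (induction xs) (simp_all add: skew_add_eq_plus zero_fun_def)

lemma sum_fun_apply: "(sum f I) x = (\<Sum>i\<in>I. f i x)"
  by (induction I rule: infinite_finite_induct) auto

lemma sum_list_fun_apply: "(sum_list (map f xs)) x = (\<Sum>p\<leftarrow>xs. f p x)"
  by (induction xs) auto

lemma sum_list_sum_swap: "(\<Sum>p\<leftarrow>xs. \<Sum>g\<in>F. f p g) = (\<Sum>g\<in>F. \<Sum>p\<leftarrow>xs. f p g)"
  by (induction xs) (simp_all add: sum.distrib)

context global_groupoid_action
begin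

abbreviation "S \<equiv> skew_carrier G \<iota>"
abbreviation "mul \<equiv> skew_mult G \<alpha>"
abbreviation "emb \<equiv> skew_emb G \<iota>"

lemma skew_carrier_outside: "u \<in> S \<Longrightarrow> g \<notin> M \<Longrightarrow> u g = 0"
  and skew_carrier_finite: "u \<in> S \<Longrightarrow> finite {g. u g \<noteq> 0}"
  and skew_carrier_val: "u \<in> S \<Longrightarrow> g \<in> M \<Longrightarrow> u g \<in> A (t g)"
  unfolding skew_carrier_def by blast+

lemma skew_carrierI:
  "(\<And>g. g \<notin> M \<Longrightarrow> u g = 0) \<Longrightarrow> finite {g. u g \<noteq> 0} \<Longrightarrow> (\<And>g. g \<in> M \<Longrightarrow> u g \<in> A (t g))
    \<Longrightarrow> u \<in> S"
  unfolding skew_carrier_def by blast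

lemma skew_zero_mem: "0 \<in> S"
  by (rule skew_carrierI) (auto simp: ideal_zero tgt_obj)

lemma skew_add_mem:
  assumes "u \<in> S" "v \<in> S"
  shows "u + v \<in> S"
proof (rule skew_carrierI)
  show "finite {g. (u + v) g \<noteq> 0}"
    using skew_carrier_finite[OF assms(1)] skew_carrier_finite[OF assms(2)]
    by (rule finite_subset[rotated, OF finite_UnI]) auto
qed (auto simp: assms skew_carrier_outside skew_carrier_val ideal_add tgt_obj)

lemma skew_monom_mem: "g \<in> M \<Longrightarrow> c \<in> A (t g) \<Longrightarrow> skew_monom g c \<in> S"
  by (rule skew_carrierI) (auto simp: skew_monom_def ideal_zero tgt_obj intro: finite_subset[of _ "{g}"])

lemma skew_emb_mem: "emb b \<in> S"
proof (rule skew_carrierI)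
  show "finite {g. emb b g \<noteq> 0}"
    by (rule finite_subset[OF _ finite_objs]) (auto simp: skew_emb_def split: if_splits)
qed (auto simp: skew_emb_def obj_mor obj_tgt times_unit_ideal ideal_zero tgt_obj)

lemma skew_carrier_fun_upd_zero: "u \<in> S \<Longrightarrow> u(h := 0) \<in> S"
  by (intro skew_carrierI)
    (auto simp: skew_carrier_outside skew_carrier_val ideal_zero tgt_obj
      intro: finite_subset[OF _ skew_carrier_finite])

lemma skew_carrier_induct [consumes 1, case_names zero monom add]:
  assumes u: "u \<in> S"
    and zero: "P 0"
    and monom: "\<And>h b. h \<in> M \<Longrightarrow> b \<in> A (t h) \<Longrightarrow> P (skew_monom h b)"
    and add: "\<And>v w. v \<in> S \<Longrightarrow> w \<in> S \<Longrightarrow> P v \<Longrightarrow> P w \<Longrightarrow> P (v + w)"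
  shows "P u"
proof -
  have "\<forall>u \<in> S. {g. u g \<noteq> 0} \<subseteq> H \<longrightarrow> P u" if "finite H" for H
    using that
  proof (induction H rule: finite_induct)
    case empty
    have "u = 0" if "{g. u g \<noteq> 0} \<subseteq> {}" for u :: "'g \<Rightarrow> 'a"
      using that by (auto simp: fun_eq_iff)
    then show ?case using zero by blast
  next
    case (insert h H)
    show ?case
    proof (intro ballI impI)
      fix u assume u: "u \<in> S" and supp: "{g. u g \<noteq> 0} \<subseteq> insert h H"
      let ?v = "skew_monom h (u h)" and ?w = "u(h := 0)"
      have split: "u = ?v + ?w" by (auto simp: fun_eq_iff skew_monom_def)
      have w: "?w \<in> S" using skew_carrier_fun_upd_zero[OF u] .
      have "{g. ?w g \<noteq> 0} \<subseteq> H" using supp by auto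
      then have "P ?w" using insert.IH w by blast
      moreover have "?v \<in> S \<and> P ?v"
      proof (cases "h \<in> M")
        case True then show ?thesis using skew_monom_mem monom skew_carrier_val[OF u] by blast
      next
        case False
        then have "?v = 0" using skew_carrier_outside[OF u] by (auto simp: skew_monom_def fun_eq_iff)
        then show ?thesis using skew_zero_mem zero by simp
      qed
      ultimately show "P u" using add w by (subst split) blast
    qed
  qed
  then show ?thesis using skew_carrier_finite[OF u] u by blast
qed

lemma skew_mult_outside: "k \<notin> M \<Longrightarrow> mul x y k = 0"
  unfolding skew_mult_def by (rule sum.neutral) auto

lemma skew_mult_zero_left: "mul 0 y = 0"
  and skew_mult_zero_right: "mul x 0 = 0"
  unfolding skew_mult_def by (simp_all add: zero_fun_def)

text \<open>Since \<open>g h = k\<close> determines \<open>h = g\<^sup>-\<^sup>1 k\<close>, a coefficient of a product is a sum over one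
  morphism only.\<close>
lemma skew_mult_eq_sum:
  assumes x: "x \<in> S" and k: "k \<in> M" and F: "finite F" "{g. x g \<noteq> 0} \<subseteq> F"
  shows "mul x y k = (\<Sum>g\<in>{g\<in>F. g \<in> M \<and> t g = t k}. \<alpha> g (\<alpha> (iv g) (x g) * y (cp (iv g) k)))"
proof -
  let ?P = "{(g, h). g \<in> M \<and> h \<in> M \<and> x g \<noteq> 0 \<and> y h \<noteq> 0 \<and> s g = t h \<and> cp g h = k}"
  let ?Q = "{g. g \<in> M \<and> x g \<noteq> 0 \<and> t g = t k \<and> y (cp (iv g) k) \<noteq> 0}"
  have P: "?P = (\<lambda>g. (g, cp (iv g) k)) ` ?Q"
  proof (intro set_eqI iffI)
    fix p assume "p \<in> ?P"
    then obtain g h where "p = (g, h)" "g \<in> M" "h \<in> M" "x g \<noteq> 0" "y h \<noteq> 0" "s g = t h" "cp g h = k"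
      by blast
    then show "p \<in> (\<lambda>g. (g, cp (iv g) k)) ` ?Q"
      using ginv_comp_cancel_left[of g h] by force
  next
    fix p assume "p \<in> (\<lambda>g. (g, cp (iv g) k)) ` ?Q"
    then show "p \<in> ?P" using k comp_ginv_cancel_left[of _ k] by auto
  qed
  have "mul x y k = (\<Sum>g\<in>?Q. \<alpha> g (\<alpha> (iv g) (x g) * y (cp (iv g) k)))"
    unfolding skew_mult_def P by (subst sum.reindex) (auto simp: inj_on_def)
  also have "\<dots> = (\<Sum>g\<in>{g\<in>F. g \<in> M \<and> t g = t k}. \<alpha> g (\<alpha> (iv g) (x g) * y (cp (iv g) k)))"
    using F by (intro sum.mono_neutral_left) (auto simp: act_zero)
  finally show ?thesis .
qed

lemma skew_mult_mem:
  assumes x: "x \<in> S" and y: "y \<in> S"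
  shows "mul x y \<in> S"
proof (rule skew_carrierI)
  have "{k. mul x y k \<noteq> 0} \<subseteq> (\<lambda>(g, h). cp g h) ` ({g. x g \<noteq> 0} \<times> {h. y h \<noteq> 0})"
    unfolding skew_mult_def by (force elim: sum.not_neutral_contains_not_neutral)
  then show "finite {k. mul x y k \<noteq> 0}"
    using skew_carrier_finite[OF x] skew_carrier_finite[OF y] by (auto intro: finite_subset)
next
  fix k assume k: "k \<in> M"
  show "mul x y k \<in> A (t k)"
    unfolding skew_mult_eq_sum[OF x k skew_carrier_finite[OF x] subset_refl]
  proof (rule ideal_sum[OF tgt_obj[OF k]])
    fix g assume "g \<in> {g \<in> {g. x g \<noteq> 0}. g \<in> M \<and> t g = t k}"
    then have g: "g \<in> M" "t g = t k" by auto
    have "\<alpha> (iv g) (x g) * y (cp (iv g) k) \<in> A (s g)"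
      using ideal_mult_right[OF src_obj[OF g(1)] act_ginv_maps[OF g(1) skew_carrier_val[OF x g(1)]]] .
    then show "\<alpha> g (\<alpha> (iv g) (x g) * y (cp (iv g) k)) \<in> A (t k)" using act_maps g by metis
  qed
qed (simp add: skew_mult_outside)

lemma skew_mult_add_left:
  assumes x: "x \<in> S" and x': "x' \<in> S"
  shows "mul (x + x') y = mul x y + mul x' y"
proof
  fix k
  show "mul (x + x') y k = (mul x y + mul x' y) k"
  proof (cases "k \<in> M")
    case k: True
    let ?F = "{g. x g \<noteq> 0} \<union> {g. x' g \<noteq> 0}"
    have F: "finite ?F" using skew_carrier_finite[OF x] skew_carrier_finite[OF x'] by simp
    have "\<alpha> g (\<alpha> (iv g) ((x + x') g) * z) = \<alpha> g (\<alpha> (iv g) (x g) * z) + \<alpha> g (\<alpha> (iv g) (x' g) * z)"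
      if g: "g \<in> M" for g z
    proof -
      have a: "\<alpha> (iv g) (x g) \<in> A (s g)" "\<alpha> (iv g) (x' g) \<in> A (s g)"
        using act_ginv_maps[OF g] skew_carrier_val[OF x g] skew_carrier_val[OF x' g] by auto
      have "\<alpha> (iv g) ((x + x') g) = \<alpha> (iv g) (x g) + \<alpha> (iv g) (x' g)"
        using act_add[of "iv g" "x g" "x' g"] skew_carrier_val[OF x g] skew_carrier_val[OF x' g] g by simp
      then show ?thesis
        using act_add[OF g ideal_mult_right[OF src_obj[OF g] a(1)] ideal_mult_right[OF src_obj[OF g] a(2)]]
        by (simp add: distrib_right)
    qed
    then have "mul (x + x') y k = (\<Sum>g\<in>{g\<in>?F. g \<in> M \<and> t g = t k}.
        \<alpha> g (\<alpha> (iv g) (x g) * y (cp (iv g) k)) + \<alpha> g (\<alpha> (iv g) (x' g) * y (cp (iv g) k)))"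
      by (subst skew_mult_eq_sum[OF skew_add_mem[OF x x'] k F]) auto
    then show ?thesis
      by (simp add: sum.distrib skew_mult_eq_sum[OF x k F] skew_mult_eq_sum[OF x' k F])
  qed (simp add: skew_mult_outside)
qed

lemma skew_mult_add_right:
  assumes x: "x \<in> S"
  shows "mul x (y + y') = mul x y + mul x y'"
proof
  fix k
  show "mul x (y + y') k = (mul x y + mul x y') k"
  proof (cases "k \<in> M")
    case k: True
    have "\<alpha> g (\<alpha> (iv g) (x g) * (z + z')) = \<alpha> g (\<alpha> (iv g) (x g) * z) + \<alpha> g (\<alpha> (iv g) (x g) * z')"
      if g: "g \<in> M" for g z z'
    proof -
      have a: "\<alpha> (iv g) (x g) \<in> A (s g)" using act_ginv_maps[OF g skew_carrier_val[OF x g]] .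
      show ?thesis
        using act_add[OF g ideal_mult_right[OF src_obj[OF g] a] ideal_mult_right[OF src_obj[OF g] a]]
        by (simp add: distrib_left)
    qed
    then show ?thesis
      using skew_mult_eq_sum[OF x k skew_carrier_finite[OF x] subset_refl, of "y + y'"]
        skew_mult_eq_sum[OF x k skew_carrier_finite[OF x] subset_refl, of y]
        skew_mult_eq_sum[OF x k skew_carrier_finite[OF x] subset_refl, of y']
      by (auto simp: sum.distrib)
  qed (simp add: skew_mult_outside)
qed

lemma skew_monom_mult_left:
  assumes h: "h \<in> M" and c: "c \<in> A (t h)"
  shows "mul (skew_monom h c) y k =
    (if k \<in> M \<and> t k = t h then \<alpha> h (\<alpha> (iv h) c * y (cp (iv h) k)) else 0)"
proof (cases "k \<in> M")
  case k: True
  have "mul (skew_monom h c) y k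
      = (\<Sum>g\<in>{g\<in>{h}. g \<in> M \<and> t g = t k}. \<alpha> g (\<alpha> (iv g) (skew_monom h c g) * y (cp (iv g) k)))"
    by (rule skew_mult_eq_sum[OF skew_monom_mem[OF h c] k]) (auto simp: skew_monom_def)
  also have "{g\<in>{h}. g \<in> M \<and> t g = t k} = (if t k = t h then {h} else {})" using h by auto
  finally show ?thesis using k by (simp add: skew_monom_def)
qed (simp add: skew_mult_outside)

lemma skew_mult_monom_right:
  assumes x: "x \<in> S" and h: "h \<in> M"
  shows "mul x (skew_monom h d) k =
    (if k \<in> M \<and> s k = s h then \<alpha> (cp k (iv h)) (\<alpha> (iv (cp k (iv h))) (x (cp k (iv h))) * d) else 0)"
proof (cases "k \<in> M")
  case k: True
  let ?g = "cp k (iv h)"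
  let ?F = "{g. x g \<noteq> 0} \<union> {?g}"
  have F: "finite ?F" using skew_carrier_finite[OF x] by simp
  have hit: "cp (iv g) k = h \<longleftrightarrow> s k = s h \<and> g = ?g" if "g \<in> M" "t g = t k" for g
    using ginv_comp_eq_iff[OF that(1) h k that(2)] comp_eq_iff_ginv[OF that(1) h k] by blast
  have "mul x (skew_monom h d) k
      = (\<Sum>g\<in>{g\<in>?F. g \<in> M \<and> t g = t k}. \<alpha> g (\<alpha> (iv g) (x g) * skew_monom h d (cp (iv g) k)))"
    by (rule skew_mult_eq_sum[OF x k F]) auto
  also have "\<dots>
      = (\<Sum>g\<in>{g\<in>?F. g \<in> M \<and> t g = t k}. if g = ?g \<and> s k = s h then \<alpha> ?g (\<alpha> (iv ?g) (x ?g) * d) else 0)"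
    by (intro sum.cong refl) (auto simp: skew_monom_def hit act_zero)
  also have "\<dots> = (if s k = s h then \<alpha> ?g (\<alpha> (iv ?g) (x ?g) * d) else 0)"
    using F h k by (simp add: sum.delta[OF finite_Collect_conjI] if_distrib cong: if_cong)
  finally show ?thesis using k by simp
qed (simp add: skew_mult_outside)

lemma skew_monom_mult:
  assumes h: "h \<in> M" and b: "b \<in> A (t h)" and g: "g \<in> M" and c: "c \<in> A (t g)"
  shows "mul (skew_monom h b) (skew_monom g c) =
    (if s h = t g then skew_monom (cp h g) (\<alpha> h (\<alpha> (iv h) b * c)) else 0)"
proof
  fix k
  have "t k = t h \<Longrightarrow> k \<in> M \<Longrightarrow> cp (iv h) k = g \<longleftrightarrow> s h = t g \<and> k = cp h g"
    using ginv_comp_eq_iff[OF h g] by simp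
  moreover have "k = cp h g \<Longrightarrow> s h = t g \<Longrightarrow> k \<in> M \<and> t k = t h" using h g by simp
  ultimately show "mul (skew_monom h b) (skew_monom g c) k =
      (if s h = t g then skew_monom (cp h g) (\<alpha> h (\<alpha> (iv h) b * c)) else 0) k"
    unfolding skew_monom_mult_left[OF h b] by (auto simp: skew_monom_def act_zero[OF h])
qed

lemma skew_emb_mult:
  assumes y: "y \<in> S"
  shows "mul (emb b) y = (\<lambda>k. b * y k)"
proof
  fix k
  show "mul (emb b) y k = b * y k"
  proof (cases "k \<in> M")
    case k: True
    have tk: "t k \<in> Ob" and yk: "y k \<in> A (t k)"
      using tgt_obj[OF k] skew_carrier_val[OF y k] by auto
    have "mul (emb b) y k
        = (\<Sum>g\<in>{g\<in>Ob. g \<in> M \<and> t g = t k}. \<alpha> g (\<alpha> (iv g) (emb b g) * y (cp (iv g) k)))"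
      by (rule skew_mult_eq_sum[OF skew_emb_mem k finite_objs]) (auto simp: skew_emb_def split: if_splits)
    also have "{g\<in>Ob. g \<in> M \<and> t g = t k} = {t k}" using tk by (auto simp: obj_tgt obj_mor)
    also have "(\<Sum>g\<in>{t k}. \<alpha> g (\<alpha> (iv g) (emb b g) * y (cp (iv g) k))) = b * \<iota> (t k) * y k"
      using tk k act_obj[OF tk times_unit_ideal[OF tk]] act_obj[OF tk ideal_mult_left[OF tk yk]]
      by (simp add: ginv_obj skew_emb_def)
    also have "\<dots> = b * y k" using unit_mult_ideal[OF tk yk] by (simp add: mult.assoc)
    finally show ?thesis .
  qed (simp add: skew_mult_outside skew_carrier_outside[OF y])
qed

lemma skew_mult_emb:
  assumes x: "x \<in> S"
  shows "mul x (emb b) = (\<lambda>k. x k * \<alpha> k (b * \<iota> (s k)))"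
proof
  fix k
  show "mul x (emb b) k = x k * \<alpha> k (b * \<iota> (s k))"
  proof (cases "k \<in> M")
    case k: True
    let ?F = "{g. x g \<noteq> 0} \<union> {k}"
    have F: "finite ?F" using skew_carrier_finite[OF x] by simp
    have hit: "cp (iv g) k \<in> Ob \<longleftrightarrow> g = k" if "g \<in> M" "t g = t k" for g
    proof
      assume "cp (iv g) k \<in> Ob"
      then have "cp (iv g) k = s g" using that k obj_tgt by fastforce
      then show "g = k" using comp_ginv_cancel_left[of g k] that k by simp
    qed (use k src_obj in simp)
    have "mul x (emb b) k
        = (\<Sum>g\<in>{g\<in>?F. g \<in> M \<and> t g = t k}. \<alpha> g (\<alpha> (iv g) (x g) * emb b (cp (iv g) k)))"
      by (rule skew_mult_eq_sum[OF x k F]) auto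
    also have "\<dots> = (\<Sum>g\<in>{g\<in>?F. g \<in> M \<and> t g = t k}.
        if g = k then \<alpha> k (\<alpha> (iv k) (x k) * (b * \<iota> (s k))) else 0)"
      by (intro sum.cong refl) (auto simp: skew_emb_def hit act_zero)
    also have "\<dots> = \<alpha> k (\<alpha> (iv k) (x k) * (b * \<iota> (s k)))"
      using F k by (simp add: sum.delta'[OF finite_Collect_conjI])
    also have "\<dots> = x k * \<alpha> k (b * \<iota> (s k))"
      using act_mult[OF k act_ginv_maps[OF k skew_carrier_val[OF x k]] times_unit_ideal[OF src_obj[OF k]]]
        act_act_ginv[OF k skew_carrier_val[OF x k]] by simp
    finally show ?thesis .
  qed (simp add: skew_mult_outside skew_carrier_outside[OF x])
qed

lemma ginv_act_mult_emb:
  assumes g: "g \<in> M" and x: "x \<in> S"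
  shows "\<alpha> (iv g) (mul x (emb b) g) = \<alpha> (iv g) (x g) * b"
proof -
  have sg: "s g \<in> Ob" using src_obj[OF g] .
  have bi: "b * \<iota> (s g) \<in> A (s g)" and xg: "\<alpha> (iv g) (x g) \<in> A (s g)"
    using times_unit_ideal[OF sg] act_ginv_maps[OF g skew_carrier_val[OF x g]] by auto
  have "\<alpha> (iv g) (mul x (emb b) g) = \<alpha> (iv g) (x g) * (b * \<iota> (s g))"
    using act_mult[of "iv g" "x g" "\<alpha> g (b * \<iota> (s g))"] g skew_carrier_val[OF x g]
      act_maps[OF g bi] act_ginv_act[OF g bi]
    by (simp add: skew_mult_emb[OF x])
  also have "\<dots> = \<alpha> (iv g) (x g) * \<iota> (s g) * b"
    using unit_central[OF sg] by (simp add: mult.assoc)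
  also have "\<dots> = \<alpha> (iv g) (x g) * b"
    using ideal_at_iff[OF sg] xg by simp
  finally show ?thesis .
qed

definition unit_monom :: "'g \<Rightarrow> 'g \<Rightarrow> 'a" where
  "unit_monom h = skew_monom h (\<iota> (t h))"

lemma unit_monom_mem: "h \<in> M \<Longrightarrow> unit_monom h \<in> S"
  unfolding unit_monom_def by (rule skew_monom_mem) (auto simp: ideal_unit tgt_obj)

lemma unit_monom_mult:
  assumes h: "h \<in> M" and y: "y \<in> S"
  shows "mul (unit_monom h) y k = (if k \<in> M \<and> t k = t h then \<alpha> h (y (cp (iv h) k)) else 0)"
proof -
  have "\<iota> (s h) * y (cp (iv h) k) = y (cp (iv h) k)" if "k \<in> M" "t k = t h"
    using that h unit_mult_ideal[OF src_obj[OF h]] skew_carrier_val[OF y, of "cp (iv h) k"] by simp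
  then show ?thesis
    unfolding unit_monom_def skew_monom_mult_left[OF h ideal_unit[OF tgt_obj[OF h]]]
    using act_unit[of "iv h"] h by simp
qed

lemma mult_unit_monom:
  assumes x: "x \<in> S" and h: "h \<in> M"
  shows "mul x (unit_monom h) k = (if k \<in> M \<and> s k = s h then x (cp k (iv h)) else 0)"
proof -
  have "\<alpha> (cp k (iv h)) (\<alpha> (iv (cp k (iv h))) (x (cp k (iv h))) * \<iota> (t h)) = x (cp k (iv h))"
    if "k \<in> M" "s k = s h" for k
  proof -
    let ?g = "cp k (iv h)"
    have g: "?g \<in> M" "s ?g = t h" using that h by simp_all
    have "\<alpha> (iv ?g) (x ?g) \<in> A (t h)"
      using act_ginv_maps[OF g(1) skew_carrier_val[OF x g(1)]] g(2) by simp
    then show ?thesis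
      using ideal_at_iff[OF tgt_obj[OF h]] act_act_ginv[OF g(1) skew_carrier_val[OF x g(1)]] by simp
  qed
  then show ?thesis
    unfolding unit_monom_def skew_mult_monom_right[OF x h] by simp
qed

end

section \<open>Tensor relations and balanced maps\<close>

abbreviation finite_support :: "('s \<times> 's \<Rightarrow> int) \<Rightarrow> bool" where
  "finite_support z \<equiv> finite {q. z q \<noteq> 0}"

lemma tensor_null_zero: "0 \<in> tensor_null S ad mu R"
  using tensor_null.zero by (simp add: zero_fun_def)

lemma tensor_null_add_gen:
  "z \<in> tensor_null S ad mu R \<Longrightarrow> w \<in> tensor_gens S ad mu R \<Longrightarrow> z + w \<in> tensor_null S ad mu R"
  using tensor_null.plus[of z S ad mu R w] by (simp add: plus_fun_def)

lemma tensor_null_diff_gen: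
  "z \<in> tensor_null S ad mu R \<Longrightarrow> w \<in> tensor_gens S ad mu R \<Longrightarrow> z - w \<in> tensor_null S ad mu R"
  using tensor_null.minus[of z S ad mu R w] by (simp add: fun_diff_def)

lemma tensor_null_add:
  assumes "z \<in> tensor_null S ad mu R" "w \<in> tensor_null S ad mu R"
  shows "z + w \<in> tensor_null S ad mu R"
  using assms(2)
proof (induction w rule: tensor_null.induct)
  case zero
  then show ?case using assms(1) by (simp flip: zero_fun_def)
next
  case (plus w g)
  have "z + (\<lambda>q. w q + g q) = (z + w) + g" by (simp add: plus_fun_def add.assoc)
  then show ?case by (metis tensor_null_add_gen[OF plus.IH plus.hyps(2)])
next
  case (minus w g)
  have "z + (\<lambda>q. w q - g q) = (z + w) - g" by (simp add: plus_fun_def fun_diff_def algebra_simps)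
  then show ?case by (metis tensor_null_diff_gen[OF minus.IH minus.hyps(2)])
qed

lemma tensor_null_uminus:
  assumes "z \<in> tensor_null S ad mu R"
  shows "- z \<in> tensor_null S ad mu R"
  using assms
proof (induction z rule: tensor_null.induct)
  case zero
  then show ?case using tensor_null_zero by (simp add: zero_fun_def)
next
  case (plus w g)
  have "- (\<lambda>q. w q + g q) = (- w) - g" by (simp add: fun_Compl_def fun_diff_def)
  then show ?case by (metis tensor_null_diff_gen[OF plus.IH plus.hyps(2)])
next
  case (minus w g)
  have "- (\<lambda>q. w q - g q) = (- w) + g" by (simp add: fun_Compl_def plus_fun_def)
  then show ?case by (metis tensor_null_add_gen[OF minus.IH minus.hyps(2)])
qed

lemma tensor_null_diff:
  "z \<in> tensor_null S ad mu R \<Longrightarrow> w \<in> tensor_null S ad mu R \<Longrightarrow> z - w \<in> tensor_null S ad mu R"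
  unfolding diff_conv_add_uminus by (intro tensor_null_add tensor_null_uminus)

lemma tensor_null_sum:
  "(\<And>i. i \<in> I \<Longrightarrow> f i \<in> tensor_null S ad mu R) \<Longrightarrow> sum f I \<in> tensor_null S ad mu R"
  by (induction I rule: infinite_finite_induct) (auto simp: tensor_null_zero tensor_null_add)

lemma tensor_null_sum_list:
  "(\<And>p. p \<in> set xs \<Longrightarrow> f p \<in> tensor_null S ad mu R) \<Longrightarrow> sum_list (map f xs) \<in> tensor_null S ad mu R"
  by (induction xs) (auto simp: tensor_null_zero tensor_null_add)

lemma tensor_gen_in_null: "w \<in> tensor_gens S ad mu R \<Longrightarrow> w \<in> tensor_null S ad mu R"
  using tensor_null_add_gen[OF tensor_null_zero] by simp

lemma tensor_null_add_left:
  "u \<in> S \<Longrightarrow> u' \<in> S \<Longrightarrow> v \<in> S \<Longrightarrow>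
    tdelta (ad u u', v) - tdelta (u, v) - tdelta (u', v) \<in> tensor_null S ad mu R"
  unfolding fun_diff_def by (rule tensor_gen_in_null, unfold tensor_gens_def, rule UnI1, rule UnI1) blast

lemma tensor_null_add_right:
  "u \<in> S \<Longrightarrow> v \<in> S \<Longrightarrow> v' \<in> S \<Longrightarrow>
    tdelta (u, ad v v') - tdelta (u, v) - tdelta (u, v') \<in> tensor_null S ad mu R"
  unfolding fun_diff_def by (rule tensor_gen_in_null, unfold tensor_gens_def, rule UnI1, rule UnI2) blast

lemma tensor_null_balanced:
  "u \<in> S \<Longrightarrow> r \<in> R \<Longrightarrow> v \<in> S \<Longrightarrow> tdelta (mu u r, v) - tdelta (u, mu r v) \<in> tensor_null S ad mu R"
  unfolding fun_diff_def by (rule tensor_gen_in_null, unfold tensor_gens_def, rule UnI2) blast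

lemma tensor_null_zero_left:
  assumes "ad z z = z" "z \<in> S" "v \<in> S"
  shows "tdelta (z, v) \<in> tensor_null S ad mu R"
proof -
  have "tdelta (ad z z, v) - tdelta (z, v) - tdelta (z, v) \<in> tensor_null S ad mu R"
    by (rule tensor_null_add_left[OF assms(2,2,3)])
  then show ?thesis using tensor_null_uminus assms(1) by fastforce
qed

lemma tensor_null_zero_right:
  assumes "ad z z = z" "u \<in> S" "z \<in> S"
  shows "tdelta (u, z) \<in> tensor_null S ad mu R"
proof -
  have "tdelta (u, ad z z) - tdelta (u, z) - tdelta (u, z) \<in> tensor_null S ad mu R"
    by (rule tensor_null_add_right[OF assms(2,3,3)])
  then show ?thesis using tensor_null_uminus assms(1) by fastforce
qed

lemma formal_sum_map: "formal_sum (map f xs) = sum_list (map (\<lambda>p. tdelta (f p)) xs)"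
proof
  fix q
  have "sum_list (map (\<lambda>p. tdelta (f p)) xs) q = (\<Sum>p\<leftarrow>xs. tdelta (f p) q)"
    by (induction xs) auto
  then show "formal_sum (map f xs) q = sum_list (map (\<lambda>p. tdelta (f p)) xs) q"
    unfolding formal_sum_def by (induction xs) (auto simp: tdelta_def)
qed

definition formal_eval :: "('s \<times> 's \<Rightarrow> 'b::ring_1) \<Rightarrow> ('s \<times> 's \<Rightarrow> int) \<Rightarrow> 'b" where
  "formal_eval \<phi> z = (\<Sum>q\<in>{q. z q \<noteq> 0}. of_int (z q) * \<phi> q)"

lemma formal_eval_superset:
  "finite F \<Longrightarrow> {q. z q \<noteq> 0} \<subseteq> F \<Longrightarrow> formal_eval \<phi> z = (\<Sum>q\<in>F. of_int (z q) * \<phi> q)"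
  unfolding formal_eval_def by (rule sum.mono_neutral_left) auto

lemma finite_support_add: "finite_support z \<Longrightarrow> finite_support w \<Longrightarrow> finite_support (z + w)"
  and finite_support_diff: "finite_support z \<Longrightarrow> finite_support w \<Longrightarrow> finite_support (z - w)"
  by (auto intro: finite_subset[of _ "{q. z q \<noteq> 0} \<union> {q. w q \<noteq> 0}"])

lemma finite_support_tdelta: "finite_support (tdelta p)"
  by (rule finite_subset[of _ "{p}"]) (auto simp: tdelta_def)

lemma formal_eval_add:
  assumes "finite_support z" "finite_support w"
  shows "formal_eval \<phi> (z + w) = formal_eval \<phi> z + formal_eval \<phi> w"
proof -
  let ?F = "{q. z q \<noteq> 0} \<union> {q. w q \<noteq> 0}"
  have "finite ?F" using assms by simp
  then show ?thesis
    by (subst (1 2 3) formal_eval_superset[of ?F]) (auto simp: sum.distrib distrib_right)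
qed

lemma formal_eval_diff:
  assumes "finite_support z" "finite_support w"
  shows "formal_eval \<phi> (z - w) = formal_eval \<phi> z - formal_eval \<phi> w"
proof -
  let ?F = "{q. z q \<noteq> 0} \<union> {q. w q \<noteq> 0}"
  have "finite ?F" using assms by simp
  then show ?thesis
    by (subst (1 2 3) formal_eval_superset[of ?F]) (auto simp: sum_subtractf left_diff_distrib)
qed

lemma formal_eval_tdelta: "formal_eval \<phi> (tdelta p) = \<phi> p"
  by (subst formal_eval_superset[of "{p}"]) (auto simp: tdelta_def)

lemma finite_support_tdelta_sum_list: "finite_support (sum_list (map (\<lambda>p. tdelta (f p)) xs))"
proof (induction xs)
  case (Cons a xs)
  then show ?case using finite_support_add[OF finite_support_tdelta] by simp
qed simp

lemma formal_eval_tdelta_sum_list: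
  "formal_eval \<phi> (sum_list (map (\<lambda>p. tdelta (f p)) xs)) = (\<Sum>p\<leftarrow>xs. \<phi> (f p))"
proof (induction xs)
  case Nil
  then show ?case by (simp add: formal_eval_def)
next
  case (Cons a xs)
  have "formal_eval \<phi> (sum_list (map (\<lambda>p. tdelta (f p)) (a # xs)))
      = formal_eval \<phi> (tdelta (f a) + sum_list (map (\<lambda>p. tdelta (f p)) xs))"
    by (simp only: list.map sum_list.Cons)
  also have "\<dots> = \<phi> (f a) + (\<Sum>p\<leftarrow>xs. \<phi> (f p))"
    by (simp only: formal_eval_add[OF finite_support_tdelta finite_support_tdelta_sum_list]
        formal_eval_tdelta Cons.IH)
  finally show ?case by (simp only: list.map sum_list.Cons)
qed

lemma finite_support_tdelta_diff2: "finite_support (\<lambda>q. tdelta a q - tdelta b q)"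
  and finite_support_tdelta_diff3: "finite_support (\<lambda>q. tdelta a q - tdelta b q - tdelta c q)"
  by (auto intro: finite_subset[of _ "{a, b, c}"] finite_subset[of _ "{a, b}"] simp: tdelta_def)

lemma tensor_gens_finite_support: "w \<in> tensor_gens S ad mu R \<Longrightarrow> finite_support w"
  unfolding tensor_gens_def
  by (elim UnE CollectE exE conjE) (simp_all only: finite_support_tdelta_diff2 finite_support_tdelta_diff3)

lemma formal_eval_tdelta_diff2: "formal_eval \<phi> (tdelta a - tdelta b) = \<phi> a - \<phi> b"
  and formal_eval_tdelta_diff3: "formal_eval \<phi> (tdelta a - tdelta b - tdelta c) = \<phi> a - \<phi> b - \<phi> c"
  by (simp_all only: formal_eval_diff[OF finite_support_diff[OF finite_support_tdelta finite_support_tdelta]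
      finite_support_tdelta] formal_eval_diff[OF finite_support_tdelta finite_support_tdelta]
      formal_eval_tdelta)

context
  fixes S R :: "'s set" and ad mu :: "'s \<Rightarrow> 's \<Rightarrow> 's" and \<phi> :: "'s \<times> 's \<Rightarrow> 'b::ring_1"
  assumes add_left: "\<And>u u' v. u \<in> S \<Longrightarrow> u' \<in> S \<Longrightarrow> v \<in> S \<Longrightarrow> \<phi> (ad u u', v) = \<phi> (u, v) + \<phi> (u', v)"
    and add_right: "\<And>u v v'. u \<in> S \<Longrightarrow> v \<in> S \<Longrightarrow> v' \<in> S \<Longrightarrow> \<phi> (u, ad v v') = \<phi> (u, v) + \<phi> (u, v')"
    and balanced: "\<And>u r v. u \<in> S \<Longrightarrow> r \<in> R \<Longrightarrow> v \<in> S \<Longrightarrow> \<phi> (mu u r, v) = \<phi> (u, mu r v)"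
begin

lemma formal_eval_tensor_gens: "w \<in> tensor_gens S ad mu R \<Longrightarrow> formal_eval \<phi> w = 0"
  unfolding tensor_gens_def
proof (elim UnE CollectE exE conjE)
  fix u u' v assume "w = (\<lambda>q. tdelta (ad u u', v) q - tdelta (u, v) q - tdelta (u', v) q)"
    "u \<in> S" "u' \<in> S" "v \<in> S"
  then show ?thesis
    using formal_eval_tdelta_diff3[of \<phi> "(ad u u', v)" "(u, v)" "(u', v)"] add_left
    by (simp add: fun_diff_def)
next
  fix u v v' assume "w = (\<lambda>q. tdelta (u, ad v v') q - tdelta (u, v) q - tdelta (u, v') q)"
    "u \<in> S" "v \<in> S" "v' \<in> S"
  then show ?thesis
    using formal_eval_tdelta_diff3[of \<phi> "(u, ad v v')" "(u, v)" "(u, v')"] add_right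
    by (simp add: fun_diff_def)
next
  fix u r v assume "w = (\<lambda>q. tdelta (mu u r, v) q - tdelta (u, mu r v) q)" "u \<in> S" "r \<in> R" "v \<in> S"
  then show ?thesis
    using formal_eval_tdelta_diff2[of \<phi> "(mu u r, v)" "(u, mu r v)"] balanced
    by (simp add: fun_diff_def)
qed

text \<open>A biadditive \<open>R\<close>-balanced map factors through \<open>S \<otimes>\<^sub>R S\<close>.\<close>
lemma formal_eval_tensor_null:
  "z \<in> tensor_null S ad mu R \<Longrightarrow> finite_support z \<and> formal_eval \<phi> z = 0"
proof (induction z rule: tensor_null.induct)
  case zero
  then show ?case by (simp add: formal_eval_def)
next
  case (plus z w)
  have w: "finite_support w" "formal_eval \<phi> w = 0"
    using plus.hyps(2) tensor_gens_finite_support formal_eval_tensor_gens by auto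
  have "formal_eval \<phi> (z + w) = 0" and "finite_support (z + w)"
    using plus.IH w formal_eval_add[of z w \<phi>] finite_support_add[of z w] by auto
  then show ?case by (simp only: plus_fun_def)
next
  case (minus z w)
  have w: "finite_support w" "formal_eval \<phi> w = 0"
    using minus.hyps(2) tensor_gens_finite_support formal_eval_tensor_gens by auto
  have "formal_eval \<phi> (z - w) = 0" and "finite_support (z - w)"
    using minus.IH w formal_eval_diff[of z w \<phi>] finite_support_diff[of z w] by auto
  then show ?case by (simp only: fun_diff_def)
qed

end

context global_groupoid_action
begin

lemma trace_j_eq_sum:
  assumes "finite M" "e \<in> Ob"
  shows "trace_j G \<iota> \<alpha> e a = (\<Sum>g\<in>{g\<in>M. t g = e}. \<alpha> g (a * \<iota> (s g)))"
proof -
  have "{g\<in>M. t g = e} = (\<Union>d\<in>Ob. hom G d e)"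
    unfolding hom_def by (auto simp: src_obj)
  moreover have "trace_j G \<iota> \<alpha> e a = (\<Sum>g\<in>(\<Union>d\<in>Ob. hom G d e). \<alpha> g (a * \<iota> (s g)))"
    unfolding trace_j_def trace_ij_def using assms(1)
    by (intro sum.UNION_disjoint[symmetric]) (auto simp: finite_objs hom_def intro: finite_subset)
  ultimately show ?thesis by simp
qed

lemma trace_j_translate:
  assumes conn: "connected_groupoid G" and fin: "finite M" and k: "k \<in> Ob" and e: "e \<in> Ob"
    and tk: "trace_j G \<iota> \<alpha> k a = \<iota> k"
  shows "trace_j G \<iota> \<alpha> e a = \<iota> e"
proof -
  obtain h where h: "h \<in> M" "s h = k" "t h = e"
    using conn k e unfolding connected_groupoid_def hom_def by blast
  have terms: "\<alpha> g (a * \<iota> (s g)) \<in> A (s h)" if "g \<in> M" "t g = k" for g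
    using act_maps[OF that(1) times_unit_ideal[OF src_obj[OF that(1)]]] that h by simp
  have "\<iota> e = \<alpha> h (\<iota> k)" using act_unit[OF h(1)] h by simp
  also have "\<dots> = \<alpha> h (\<Sum>g\<in>{g\<in>M. t g = k}. \<alpha> g (a * \<iota> (s g)))"
    using tk trace_j_eq_sum[OF fin k] by simp
  also have "\<dots> = (\<Sum>g\<in>{g\<in>M. t g = k}. \<alpha> h (\<alpha> g (a * \<iota> (s g))))"
    by (rule act_sum[OF h(1)]) (use terms in auto)
  also have "\<dots> = (\<Sum>g\<in>{g\<in>M. t g = k}. \<alpha> (cp h g) (a * \<iota> (s (cp h g))))"
    using h by (intro sum.cong refl) (auto simp: act_comp times_unit_ideal src_obj)
  also have "\<dots> = (\<Sum>g\<in>{g\<in>M. t g = e}. \<alpha> g (a * \<iota> (s g)))"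
    by (rule sum.reindex_bij_witness[of _ "cp (iv h)" "cp h"])
      (use h in \<open>auto simp: ginv_comp_cancel_left comp_ginv_cancel_left\<close>)
  finally show ?thesis using trace_j_eq_sum[OF fin e] by simp
qed

end

section \<open>A separability element yields a trace-one element\<close>

locale separability_element = global_groupoid_action G \<iota> \<alpha>
  for G :: "('g, 'x) groupoid_scheme" and \<iota> :: "'g \<Rightarrow> 'a::ring_1" and \<alpha> +
  fixes xs :: "(('g \<Rightarrow> 'a) \<times> ('g \<Rightarrow> 'a)) list"
  assumes xs_mem: "set xs \<subseteq> S \<times> S"
    and xs_mult: "foldr (\<lambda>p acc. skew_add (mul (fst p) (snd p)) acc) xs (\<lambda>_. 0) = skew_one G \<iota>"
    and xs_commutes: "\<And>u. u \<in> S \<Longrightarrow>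
      (\<lambda>q. formal_sum (map (\<lambda>p. (mul u (fst p), snd p)) xs) q
         - formal_sum (map (\<lambda>p. (fst p, mul (snd p) u)) xs) q) \<in> tensor_null S skew_add mul (range emb)"
begin

definition pairing :: "'g \<Rightarrow> 'g \<Rightarrow> 'a" where
  "pairing g k = (\<Sum>p\<leftarrow>xs. \<alpha> (iv g) (fst p g) * snd p k)"

definition diag :: "'g \<Rightarrow> 'a" where
  "diag e = pairing e e"

lemma xs_fst_mem: "p \<in> set xs \<Longrightarrow> fst p \<in> S"
  and xs_snd_mem: "p \<in> set xs \<Longrightarrow> snd p \<in> S"
  using xs_mem by auto

lemma pairing_commutes:
  assumes g: "g \<in> M" and u: "u \<in> S"
  shows "(\<Sum>p\<leftarrow>xs. \<alpha> (iv g) (mul u (fst p) g) * snd p k) = (\<Sum>p\<leftarrow>xs. \<alpha> (iv g) (fst p g) * mul (snd p) u k)"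
proof -
  define \<phi> where "\<phi> = (\<lambda>(x::'g \<Rightarrow> 'a, y::'g \<Rightarrow> 'a). \<alpha> (iv g) (x g) * y k)"
  have add_left: "\<phi> (skew_add x x', y) = \<phi> (x, y) + \<phi> (x', y)" if "x \<in> S" "x' \<in> S" "y \<in> S"
    for x x' y
    using act_add[of "iv g" "x g" "x' g"] skew_carrier_val that g
    by (simp add: \<phi>_def skew_add_def distrib_right)
  have add_right: "\<phi> (x, skew_add y y') = \<phi> (x, y) + \<phi> (x, y')" if "x \<in> S" "y \<in> S" "y' \<in> S"
    for x y y'
    by (simp add: \<phi>_def skew_add_def distrib_left)
  have balanced: "\<phi> (mul x r, y) = \<phi> (x, mul r y)" if x: "x \<in> S" and r: "r \<in> range emb" and y: "y \<in> S"
    for x r y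
    using r ginv_act_mult_emb[OF g x] by (auto simp: \<phi>_def skew_emb_mult[OF y] mult.assoc)
  let ?l = "sum_list (map (\<lambda>p. tdelta (mul u (fst p), snd p)) xs)"
  let ?r = "sum_list (map (\<lambda>p. tdelta (fst p, mul (snd p) u)) xs)"
  have "?l - ?r \<in> tensor_null S skew_add mul (range emb)"
    using xs_commutes[OF u] by (simp add: formal_sum_map fun_diff_def)
  then have "formal_eval \<phi> (?l - ?r) = 0"
    using formal_eval_tensor_null[OF add_left add_right balanced] by blast
  then have "formal_eval \<phi> ?l = formal_eval \<phi> ?r"
    by (simp add: formal_eval_diff[OF finite_support_tdelta_sum_list finite_support_tdelta_sum_list])
  then show ?thesis
    by (simp add: formal_eval_tdelta_sum_list \<phi>_def)
qed

lemma diag_in_ideal: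
  assumes e: "e \<in> Ob"
  shows "diag e \<in> A e"
proof -
  have "\<alpha> (iv e) (fst p e) * snd p e \<in> A e" if "p \<in> set xs" for p
    using act_ginv_maps[OF obj_mor[OF e] skew_carrier_val[OF xs_fst_mem[OF that] obj_mor[OF e]]]
      ideal_mult_right[OF e] e by (simp add: obj_src obj_tgt)
  then show ?thesis
    unfolding diag_def pairing_def
    using ideal_sum_list[OF e, of xs "\<lambda>p. \<alpha> (iv e) (fst p e) * snd p e"] by blast
qed

lemma diag_central:
  assumes e: "e \<in> Ob"
  shows "diag e \<in> center"
  unfolding center_def
proof clarify
  fix b
  have eM: "e \<in> M" using obj_mor[OF e] .
  have left: "\<alpha> (iv e) (mul (emb b) x e) = b * \<alpha> (iv e) (x e)" if "x \<in> S" for x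
  proof -
    have "x e \<in> A e" using skew_carrier_val[OF that eM] obj_tgt[OF e] by simp
    then show ?thesis
      using ginv_obj[OF e] act_obj[OF e] ideal_mult_left[OF e] by (simp add: skew_emb_mult[OF that])
  qed
  have right: "mul y (emb b) e = y e * (b * \<iota> e)" if "y \<in> S" for y
    using act_obj[OF e times_unit_ideal[OF e]] obj_src[OF e] by (simp add: skew_mult_emb[OF that])
  have "b * diag e = (\<Sum>p\<leftarrow>xs. \<alpha> (iv e) (mul (emb b) (fst p) e) * snd p e)"
    unfolding diag_def pairing_def
    by (simp add: left xs_fst_mem sum_list_const_mult mult.assoc cong: map_cong)
  also have "\<dots> = (\<Sum>p\<leftarrow>xs. \<alpha> (iv e) (fst p e) * mul (snd p) (emb b) e)"
    using pairing_commutes[OF eM skew_emb_mem] .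
  also have "\<dots> = diag e * (b * \<iota> e)"
    unfolding diag_def pairing_def
    by (simp add: right xs_snd_mem mult.assoc flip: sum_list_mult_const cong: map_cong)
  also have "\<dots> = diag e * b"
    using unit_central[OF e] ideal_at_iff[OF e] diag_in_ideal[OF e] by (metis mult.assoc)
  finally show "diag e * b = b * diag e" by simp
qed

lemma pairing_ginv:
  assumes h: "h \<in> M"
  shows "pairing (iv h) k = (if k \<in> M \<and> s k = s h then pairing (t h) (cp k (iv h)) else 0)"
proof -
  have th: "t h \<in> Ob" "t h \<in> M" using tgt_obj[OF h] obj_mor by auto
  have left: "\<alpha> (iv (t h)) (mul (unit_monom h) x (t h)) = \<alpha> (iv (iv h)) (x (iv h))" if x: "x \<in> S" for x
  proof -
    have "\<alpha> h (x (iv h)) \<in> A (t h)"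
      using act_maps[OF h] skew_carrier_val[OF x ginv_simps(1)[OF h]] h by simp
    then show ?thesis
      using h th act_obj[OF th(1)] by (simp add: unit_monom_mult[OF h x] ginv_obj)
  qed
  have "pairing (iv h) k = (\<Sum>p\<leftarrow>xs. \<alpha> (iv (t h)) (mul (unit_monom h) (fst p) (t h)) * snd p k)"
    unfolding pairing_def by (simp add: left xs_fst_mem cong: map_cong)
  also have "\<dots> = (\<Sum>p\<leftarrow>xs. \<alpha> (iv (t h)) (fst p (t h)) * mul (snd p) (unit_monom h) k)"
    using pairing_commutes[OF th(2) unit_monom_mem[OF h]] .
  also have "\<dots> = (if k \<in> M \<and> s k = s h then pairing (t h) (cp k (iv h)) else 0)"
  proof (cases "k \<in> M \<and> s k = s h")
    case True
    then show ?thesis unfolding pairing_def by (simp add: mult_unit_monom[OF _ h] xs_snd_mem cong: map_cong)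
  next
    case False
    then show ?thesis
      by (simp add: mult_unit_monom[OF _ h] xs_snd_mem if_not_P[OF False] cong: map_cong del: de_Morgan_conj)
  qed
  finally show ?thesis .
qed

lemma pairing_ginv_self: "h \<in> M \<Longrightarrow> pairing (iv h) h = diag (t h)"
  using pairing_ginv[of h h] by (simp add: diag_def)

lemma pairing_self_ginv: "g \<in> M \<Longrightarrow> pairing g (iv g) = diag (s g)"
  using pairing_ginv_self[of "iv g"] by simp

lemma unit_eq_sum_diag:
  assumes e: "e \<in> Ob" and F: "finite F" "\<And>p. p \<in> set xs \<Longrightarrow> {g. fst p g \<noteq> 0} \<subseteq> F"
  shows "\<iota> e = (\<Sum>g\<in>{g\<in>F. g \<in> M \<and> t g = e}. \<alpha> g (diag (s g)))"
proof -
  let ?F = "{g\<in>F. g \<in> M \<and> t g = e}"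
  have eM: "e \<in> M" "t e = e" using obj_mor[OF e] obj_tgt[OF e] by auto
  have "\<iota> e = (\<Sum>p\<leftarrow>xs. mul (fst p) (snd p) e)"
    using fun_cong[OF xs_mult, of e] e by (simp add: foldr_skew_add sum_list_fun_apply skew_one_def)
  also have "\<dots> = (\<Sum>p\<leftarrow>xs. \<Sum>g\<in>?F. \<alpha> g (\<alpha> (iv g) (fst p g) * snd p (iv g)))"
    using skew_mult_eq_sum[OF xs_fst_mem eM(1) F(1) F(2)] eM(2)
    by (intro arg_cong[where f = sum_list] map_cong refl) (auto intro!: sum.cong)
  also have "\<dots> = (\<Sum>g\<in>?F. \<alpha> g (pairing g (iv g)))"
    unfolding sum_list_sum_swap pairing_def
  proof (intro sum.cong refl act_sum_list[symmetric])
    fix g p assume "g \<in> ?F" "p \<in> set xs"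
    then show "\<alpha> (iv g) (fst p g) * snd p (iv g) \<in> A (s g)"
      using ideal_mult_right[OF src_obj act_ginv_maps[OF _ skew_carrier_val[OF xs_fst_mem]]] by auto
  qed auto
  also have "\<dots> = (\<Sum>g\<in>?F. \<alpha> g (diag (s g)))"
    by (simp add: pairing_self_ginv)
  finally show ?thesis .
qed

definition support_bound :: "'g set" where
  "support_bound = (\<Union>p\<in>set xs. {g. fst p g \<noteq> 0})"

lemma support_bound: "finite support_bound" "p \<in> set xs \<Longrightarrow> {g. fst p g \<noteq> 0} \<subseteq> support_bound"
  unfolding support_bound_def using skew_carrier_finite[OF xs_fst_mem] by auto

lemma diag_nonzero:
  assumes "\<forall>e\<in>Ob. A e \<noteq> {0}"
  obtains f where "f \<in> Ob" "diag f \<noteq> 0"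
proof -
  obtain e where e: "e \<in> Ob" using objs_nonempty by blast
  have "\<iota> e \<noteq> 0"
  proof
    assume "\<iota> e = 0"
    then have "A e = {0}" unfolding ideal_at_def by auto
    with assms e show False by blast
  qed
  moreover have "\<iota> e = (\<Sum>g\<in>{g\<in>support_bound. g \<in> M \<and> t g = e}. \<alpha> g (diag (s g)))"
    by (rule unit_eq_sum_diag[OF e]) (use support_bound in auto)
  ultimately obtain g where "g \<in> M" "\<alpha> g (diag (s g)) \<noteq> 0"
    using sum.not_neutral_contains_not_neutral by (metis (no_types, lifting) mem_Collect_eq)
  then show ?thesis using that src_obj act_zero by metis
qed

lemma tgt_fibre_finite:
  assumes f: "diag f \<noteq> 0"
  shows "finite {h \<in> M. t h = f}"
proof (rule finite_subset)
  show "{h \<in> M. t h = f} \<subseteq> iv ` support_bound"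
  proof
    fix h assume "h \<in> {h \<in> M. t h = f}"
    then have h: "h \<in> M" "t h = f" by auto
    have "pairing (iv h) h \<noteq> 0" using pairing_ginv_self[OF h(1)] h(2) f by simp
    then obtain p where p: "p \<in> set xs" "\<alpha> (iv (iv h)) (fst p (iv h)) * snd p h \<noteq> 0"
      unfolding pairing_def by (metis (no_types, lifting) map_eq_conv sum_list_0)
    then have "fst p (iv h) \<noteq> 0" using h act_zero by auto
    then have "iv h \<in> support_bound" using support_bound(2)[OF p(1)] by blast
    then show "h \<in> iv ` support_bound" using h by (metis image_eqI ginv_ginv)
  qed
qed (simp add: support_bound)

lemma mor_finite:
  assumes "connected_groupoid G" "\<forall>e\<in>Ob. A e \<noteq> {0}"
  shows "finite M"
proof -
  obtain f where "f \<in> Ob" "diag f \<noteq> 0" using diag_nonzero[OF assms(2)] .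
  then show ?thesis using finite_mor_if_finite_fibre[OF assms(1)] tgt_fibre_finite by blast
qed

lemma trace_one_exists:
  assumes "finite M"
  shows "\<exists>a\<in>center. \<forall>e\<in>Ob. trace_j G \<iota> \<alpha> e a = \<iota> e"
proof (intro bexI ballI)
  let ?a = "\<Sum>f\<in>Ob. diag f"
  show "?a \<in> center" using center_sum diag_central by blast
  have a: "?a * \<iota> f = diag f" if f: "f \<in> Ob" for f
  proof -
    have "?a * \<iota> f = (\<Sum>d\<in>Ob. if d = f then diag f else 0)"
      unfolding sum_distrib_right
      using ideal_at_iff[OF f] diag_in_ideal ideal_times_other_unit[OF _ f] f
      by (intro sum.cong) auto
    then show ?thesis using f finite_objs by simp
  qed
  fix e assume e: "e \<in> Ob"
  have "trace_j G \<iota> \<alpha> e ?a = (\<Sum>g\<in>{g\<in>M. t g = e}. \<alpha> g (diag (s g)))"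
    unfolding trace_j_eq_sum[OF assms e] using a src_obj by simp
  also have "\<dots> = \<iota> e"
    using unit_eq_sum_diag[OF e assms] skew_carrier_outside xs_fst_mem by (fastforce intro: sum.cong)
  finally show "trace_j G \<iota> \<alpha> e ?a = \<iota> e" .
qed

end

section \<open>A trace-one element yields a separability element\<close>

locale trace_one_element = global_groupoid_action G \<iota> \<alpha>
  for G :: "('g, 'x) groupoid_scheme" and \<iota> :: "'g \<Rightarrow> 'a::ring_1" and \<alpha> +
  fixes a :: 'a
  assumes a_central: "a \<in> center" and finite_mor: "finite M"
    and trace_one: "\<And>e. e \<in> Ob \<Longrightarrow> trace_j G \<iota> \<alpha> e a = \<iota> e"
begin

abbreviation "null \<equiv> tensor_null S skew_add mul (range emb)"

definition trace_term :: "'g \<Rightarrow> 'a" where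
  "trace_term g = \<alpha> g (a * \<iota> (s g))"

definition sep_pair :: "'g \<Rightarrow> ('g \<Rightarrow> 'a) \<times> ('g \<Rightarrow> 'a)" where
  "sep_pair g = (skew_monom g (trace_term g), skew_monom (iv g) (\<iota> (s g)))"

definition mor_list :: "'g list" where
  "mor_list = (SOME gs. set gs = M \<and> distinct gs)"

definition sep_list :: "(('g \<Rightarrow> 'a) \<times> ('g \<Rightarrow> 'a)) list" where
  "sep_list = map sep_pair mor_list"

lemma mor_list: "set mor_list = M" "distinct mor_list"
  using someI_ex[of "\<lambda>gs. set gs = M \<and> distinct gs"] finite_distinct_list[OF finite_mor]
  unfolding mor_list_def by auto

lemma trace_term_in_ideal: "g \<in> M \<Longrightarrow> trace_term g \<in> A (t g)"
  unfolding trace_term_def using act_maps times_unit_ideal src_obj by blast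

lemma trace_term_central: "g \<in> M \<Longrightarrow> trace_term g * b = b * trace_term g"
  using act_central[OF _ a_central] unfolding trace_term_def center_def by blast

lemma sum_list_sep_list: "sum_list (map f sep_list) = (\<Sum>g\<in>M. f (sep_pair g))"
  unfolding sep_list_def using mor_list by (simp add: sum_list_distinct_conv_sum_set o_def)

lemma sep_list_mem: "set sep_list \<subseteq> S \<times> S"
  unfolding sep_list_def sep_pair_def
  using mor_list(1) skew_monom_mem trace_term_in_ideal ideal_unit src_obj by auto

lemma sep_pair_mult:
  assumes g: "g \<in> M"
  shows "mul (fst (sep_pair g)) (snd (sep_pair g)) = skew_monom (t g) (trace_term g)"
proof -
  have "\<alpha> (iv g) (trace_term g) \<in> A (s g)" using act_ginv_maps[OF g trace_term_in_ideal[OF g]] .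
  then have "\<alpha> g (\<alpha> (iv g) (trace_term g) * \<iota> (s g)) = trace_term g"
    using ideal_at_iff[OF src_obj[OF g]] act_act_ginv[OF g trace_term_in_ideal[OF g]] by simp
  then show ?thesis
    unfolding sep_pair_def
    using skew_monom_mult[OF g trace_term_in_ideal[OF g] ginv_simps(1)[OF g]] ideal_unit[OF src_obj[OF g]] g
    by simp
qed

lemma sep_list_mult: "foldr (\<lambda>p acc. skew_add (mul (fst p) (snd p)) acc) sep_list (\<lambda>_. 0) = skew_one G \<iota>"
proof -
  have "(\<Sum>g\<in>M. mul (fst (sep_pair g)) (snd (sep_pair g))) = (\<Sum>g\<in>M. skew_monom (t g) (trace_term g))"
    using sep_pair_mult by (rule sum.cong[OF refl])
  moreover have "(\<Sum>g\<in>M. skew_monom (t g) (trace_term g)) k = skew_one G \<iota> k" for k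
  proof -
    have "(\<Sum>g\<in>M. skew_monom (t g) (trace_term g)) k = (\<Sum>g\<in>{g\<in>M. t g = k}. trace_term g)"
      unfolding sum_fun_apply skew_monom_def using finite_mor by (simp add: sum.inter_filter eq_commute)
    also have "\<dots> = skew_one G \<iota> k"
    proof (cases "k \<in> Ob")
      case True
      then show ?thesis
        using trace_one trace_j_eq_sum[OF finite_mor] by (simp add: skew_one_def trace_term_def)
    next
      case False
      then have "{g\<in>M. t g = k} = {}" using tgt_obj by blast
      then show ?thesis using False by (simp only: skew_one_def if_False sum.empty)
    qed
    finally show ?thesis .
  qed
  ultimately show ?thesis
    unfolding foldr_skew_add sum_list_sep_list by auto
qed

definition sep_left :: "('g \<Rightarrow> 'a) \<Rightarrow> ('g \<Rightarrow> 'a) \<times> ('g \<Rightarrow> 'a) \<Rightarrow> int" where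
  "sep_left u = (\<Sum>p\<leftarrow>sep_list. tdelta (mul u (fst p), snd p))"

definition sep_right :: "('g \<Rightarrow> 'a) \<Rightarrow> ('g \<Rightarrow> 'a) \<times> ('g \<Rightarrow> 'a) \<Rightarrow> int" where
  "sep_right u = (\<Sum>p\<leftarrow>sep_list. tdelta (fst p, mul (snd p) u))"

lemma tdelta_zero_left: "v \<in> S \<Longrightarrow> tdelta (0, v) \<in> null"
  and tdelta_zero_right: "u \<in> S \<Longrightarrow> tdelta (u, 0) \<in> null"
  by (simp_all add: tensor_null_zero_left tensor_null_zero_right skew_add_eq_plus skew_zero_mem)

lemma sep_left_add:
  assumes "u \<in> S" "v \<in> S"
  shows "sep_left (u + v) - sep_left u - sep_left v \<in> null"
  unfolding sep_left_def sum_list_subtractf[symmetric]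
proof (rule tensor_null_sum_list)
  fix p assume "p \<in> set sep_list"
  then have p: "fst p \<in> S" "snd p \<in> S" using sep_list_mem by auto
  then show "tdelta (mul (u + v) (fst p), snd p) - tdelta (mul u (fst p), snd p) - tdelta (mul v (fst p), snd p)
      \<in> null"
    using tensor_null_add_left[OF skew_mult_mem[OF assms(1) p(1)] skew_mult_mem[OF assms(2) p(1)] p(2),
        where ad = skew_add and mu = mul and R = "range emb"]
    by (simp add: skew_mult_add_left[OF assms] skew_add_eq_plus)
qed

lemma sep_right_add:
  assumes "u \<in> S" "v \<in> S"
  shows "sep_right (u + v) - sep_right u - sep_right v \<in> null"
  unfolding sep_right_def sum_list_subtractf[symmetric]
proof (rule tensor_null_sum_list)
  fix p assume "p \<in> set sep_list"
  then have p: "fst p \<in> S" "snd p \<in> S" using sep_list_mem by auto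
  then show "tdelta (fst p, mul (snd p) (u + v)) - tdelta (fst p, mul (snd p) u) - tdelta (fst p, mul (snd p) v)
      \<in> null"
    using tensor_null_add_right[OF p(1) skew_mult_mem[OF p(2) assms(1)] skew_mult_mem[OF p(2) assms(2)],
        where ad = skew_add and mu = mul and R = "range emb"]
    by (simp add: skew_mult_add_right[OF p(2)] skew_add_eq_plus)
qed

lemma sep_commutes_add:
  assumes "u \<in> S" "v \<in> S" "sep_left u - sep_right u \<in> null" "sep_left v - sep_right v \<in> null"
  shows "sep_left (u + v) - sep_right (u + v) \<in> null"
proof -
  have "sep_left (u + v) - sep_right (u + v)
      = ((sep_left (u + v) - sep_left u - sep_left v) - (sep_right (u + v) - sep_right u - sep_right v))
        + (sep_left u - sep_right u) + (sep_left v - sep_right v)"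
    by (simp add: algebra_simps)
  also have "\<dots> \<in> null"
    by (intro tensor_null_add tensor_null_diff sep_left_add sep_right_add assms)
  finally show ?thesis .
qed

lemma sep_commutes_zero: "sep_left 0 - sep_right 0 \<in> null"
  unfolding sep_left_def sep_right_def skew_mult_zero_left skew_mult_zero_right
  by (intro tensor_null_diff tensor_null_sum_list) (use sep_list_mem tdelta_zero_left tdelta_zero_right in auto)

text \<open>The term of \<open>b \<delta>\<^sub>h \<cdot> x\<close> indexed by \<open>h\<^sup>-\<^sup>1 g\<close> and the term of \<open>x \<cdot> b \<delta>\<^sub>h\<close> indexed by
  \<open>g\<close> agree up to moving the scalar \<open>\<alpha>\<^sub>g\<^sub>\<^sup>-\<^sup>1(b) \<in> A\<close> across the tensor sign.\<close>
lemma sep_matched_terms_null: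
  assumes h: "h \<in> M" and b: "b \<in> A (t h)" and g: "g \<in> M" "t g = t h"
  shows "tdelta (mul (skew_monom h b) (fst (sep_pair (cp (iv h) g))), snd (sep_pair (cp (iv h) g)))
       - tdelta (fst (sep_pair g), mul (snd (sep_pair g)) (skew_monom h b)) \<in> null"
proof -
  let ?g = "cp (iv h) g"
  have g': "?g \<in> M" "t ?g = s h" "s ?g = s g" "cp h ?g = g" "iv ?g = cp (iv g) h"
    using h g comp_ginv_cancel_left[OF h g(1) g(2)[symmetric]] ginv_ginv_comp[OF h g(1) g(2)] by simp_all
  have gh: "cp (iv g) h \<in> M" "t (cp (iv g) h) = s g" using g h by simp_all
  have bg: "b \<in> A (t g)" using b g by simp
  have b': "\<alpha> (iv g) b \<in> A (s g)" using act_ginv_maps[OF g(1) bg] .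
  let ?u = "skew_monom g (trace_term g)" and ?r = "emb (\<alpha> (iv g) b)"
    and ?v = "skew_monom (cp (iv g) h) (\<iota> (s g))"
  have u: "?u \<in> S" using skew_monom_mem[OF g(1) trace_term_in_ideal[OF g(1)]] .
  have v: "?v \<in> S" using skew_monom_mem[OF gh(1)] ideal_unit[OF src_obj[OF g(1)]] gh(2) by simp
  have "\<alpha> h (\<alpha> (iv h) b * trace_term ?g) = \<alpha> h (\<alpha> (iv h) b) * \<alpha> h (trace_term ?g)"
    using act_mult[OF h act_ginv_maps[OF h b]] trace_term_in_ideal[OF g'(1)] g'(2) by simp
  also have "\<dots> = b * trace_term g"
    unfolding trace_term_def
    using act_act_ginv[OF h b] act_comp[OF h g'(1)] g' times_unit_ideal[OF src_obj[OF g'(1)]] by simp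
  finally have left: "mul (skew_monom h b) (fst (sep_pair ?g)) = skew_monom g (b * trace_term g)"
    using skew_monom_mult[OF h b g'(1) trace_term_in_ideal[OF g'(1)]] g' by (simp add: sep_pair_def)
  have "\<alpha> g (\<alpha> (iv g) b * \<iota> (s g)) = b"
    using ideal_at_iff[OF src_obj[OF g(1)]] b' act_act_ginv[OF g(1) bg] by simp
  then have ur: "mul ?u ?r = skew_monom g (b * trace_term g)"
    unfolding skew_mult_emb[OF u] by (auto simp: skew_monom_def trace_term_central[OF g(1)])
  have "\<alpha> (iv g) (\<alpha> (iv (iv g)) (\<iota> (s g)) * b) = \<alpha> (iv g) b"
    using act_unit[OF g(1)] unit_mult_ideal[OF tgt_obj[OF g(1)] bg] g by simp
  then have right: "mul (snd (sep_pair g)) (skew_monom h b) = skew_monom (cp (iv g) h) (\<alpha> (iv g) b)"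
    using skew_monom_mult[OF ginv_simps(1)[OF g(1)] _ h b] ideal_unit[OF src_obj[OF g(1)]] g
    by (simp add: sep_pair_def)
  have rv: "mul ?r ?v = skew_monom (cp (iv g) h) (\<alpha> (iv g) b)"
    unfolding skew_emb_mult[OF v] using ideal_at_iff[OF src_obj[OF g(1)]] b'
    by (auto simp: skew_monom_def)
  have "snd (sep_pair ?g) = ?v" "fst (sep_pair g) = ?u"
    using g' by (simp_all add: sep_pair_def)
  moreover have "tdelta (mul ?u ?r, ?v) - tdelta (?u, mul ?r ?v) \<in> null"
    by (rule tensor_null_balanced[OF u _ v]) simp
  ultimately show ?thesis
    using left ur right rv by simp
qed

lemma sep_left_term_null:
  assumes h: "h \<in> M" and b: "b \<in> A (t h)" and g: "g \<in> M" "s h \<noteq> t g"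
  shows "tdelta (mul (skew_monom h b) (fst (sep_pair g)), snd (sep_pair g)) \<in> null"
proof -
  have "mul (skew_monom h b) (fst (sep_pair g)) = 0"
    using skew_monom_mult[OF h b g(1) trace_term_in_ideal[OF g(1)]] g(2) by (simp add: sep_pair_def)
  then show ?thesis
    using tdelta_zero_left skew_monom_mem ideal_unit src_obj g(1) by (simp add: sep_pair_def)
qed

lemma sep_right_term_null:
  assumes h: "h \<in> M" and b: "b \<in> A (t h)" and g: "g \<in> M" "t g \<noteq> t h"
  shows "tdelta (fst (sep_pair g), mul (snd (sep_pair g)) (skew_monom h b)) \<in> null"
proof -
  have "mul (snd (sep_pair g)) (skew_monom h b) = 0"
    using skew_monom_mult[OF ginv_simps(1)[OF g(1)] _ h b] ideal_unit[OF src_obj[OF g(1)]] g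
    by (simp add: sep_pair_def)
  then show ?thesis
    using tdelta_zero_right skew_monom_mem[OF g(1) trace_term_in_ideal[OF g(1)]] by (simp add: sep_pair_def)
qed

lemma sep_commutes_monom:
  assumes h: "h \<in> M" and b: "b \<in> A (t h)"
  shows "sep_left (skew_monom h b) - sep_right (skew_monom h b) \<in> null"
proof -
  define L where "L g = tdelta (mul (skew_monom h b) (fst (sep_pair g)), snd (sep_pair g))" for g
  define R where "R g = tdelta (fst (sep_pair g), mul (snd (sep_pair g)) (skew_monom h b))" for g
  define M1 where "M1 = {g\<in>M. t g = s h}"
  define M2 where "M2 = {g\<in>M. t g = t h}"
  have L_null: "L g \<in> null" if "g \<in> M - M1" for g
    using that sep_left_term_null[OF h b] unfolding L_def M1_def by auto
  have R_null: "R g \<in> null" if "g \<in> M - M2" for g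
    using that sep_right_term_null[OF h b] unfolding R_def M2_def by auto
  have reindex: "(\<Sum>g\<in>M1. L g) = (\<Sum>g\<in>M2. L (cp (iv h) g))"
    by (rule sum.reindex_bij_witness[of _ "cp (iv h)" "cp h"])
      (use h in \<open>auto simp: M1_def M2_def ginv_comp_cancel_left comp_ginv_cancel_left\<close>)
  have "sep_left (skew_monom h b) - sep_right (skew_monom h b)
      = (\<Sum>g\<in>M2. L (cp (iv h) g) - R g) + (\<Sum>g\<in>M - M1. L g) - (\<Sum>g\<in>M - M2. R g)"
    using sum.subset_diff[of M1 M L] sum.subset_diff[of M2 M R] finite_mor reindex
    unfolding sep_left_def sep_right_def sum_list_sep_list L_def[symmetric] R_def[symmetric]
    by (simp add: M1_def M2_def sum_subtractf algebra_simps)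
  also have "\<dots> \<in> null"
  proof -
    have "L (cp (iv h) g) - R g \<in> null" if "g \<in> M2" for g
      using sep_matched_terms_null[OF h b] that unfolding L_def R_def M2_def by auto
    then have "(\<Sum>g\<in>M2. L (cp (iv h) g) - R g) \<in> null" by (rule tensor_null_sum)
    moreover have "(\<Sum>g\<in>M - M1. L g) \<in> null" using L_null by (rule tensor_null_sum)
    moreover have "(\<Sum>g\<in>M - M2. R g) \<in> null" using R_null by (rule tensor_null_sum)
    ultimately show ?thesis by (intro tensor_null_diff tensor_null_add)
  qed
  finally show ?thesis .
qed

lemma separable: "separable_ext S skew_add mul (\<lambda>_. 0) (skew_one G \<iota>) (range emb)"
  unfolding separable_ext_def
proof (intro exI conjI ballI)
  fix u assume u: "u \<in> S"
  have "sep_left u - sep_right u \<in> null"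
    using u
  proof (induction rule: skew_carrier_induct)
    case zero
    show ?case by (rule sep_commutes_zero)
  next
    case (monom h b)
    show ?case by (rule sep_commutes_monom[OF monom])
  next
    case (add v w)
    show ?case by (rule sep_commutes_add[OF add])
  qed
  then show "(\<lambda>q. formal_sum (map (\<lambda>p. (mul u (fst p), snd p)) sep_list) q
      - formal_sum (map (\<lambda>p. (fst p, mul (snd p) u)) sep_list) q) \<in> null"
    by (simp add: sep_left_def sep_right_def formal_sum_map fun_diff_def)
qed (use sep_list_mem sep_list_mult in auto)

end

theorem corollary4p3:
  fixes G :: "'g groupoid" and \<iota> :: "'g \<Rightarrow> 'a::ring_1" and \<alpha> :: "'g \<Rightarrow> 'a \<Rightarrow> 'a"
  assumes "groupoid G"
    and "connected_groupoid G"
    and "finite (objs G)"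
    and "direct_sum_decomp G \<iota>"
    and "\<forall>e\<in>objs G. ideal_at \<iota> e \<noteq> {0}"
    and "global_action G \<iota> \<alpha>"
  shows "separable_ext (skew_carrier G \<iota>) skew_add (skew_mult G \<alpha>) (\<lambda>_. 0) (skew_one G \<iota>)
            (range (skew_emb G \<iota>))
         \<longleftrightarrow> (finite (mor G) \<and> (\<exists>a\<in>center. \<exists>k\<in>objs G. trace_j G \<iota> \<alpha> k a = \<iota> k))"
proof -
  interpret global_groupoid_action G \<iota> \<alpha>
    using assms by unfold_locales
  show ?thesis
  proof
    assume "separable_ext S skew_add mul (\<lambda>_. 0) (skew_one G \<iota>) (range emb)"
    then obtain xs where "separability_element G \<iota> \<alpha> xs"
      unfolding separable_ext_def separability_element_def separability_element_axioms_def
      using global_groupoid_action_axioms by blast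
    then interpret separability_element G \<iota> \<alpha> xs .
    have "finite M" using mor_finite assms(2,5) by blast
    then show "finite M \<and> (\<exists>a\<in>center. \<exists>k\<in>Ob. trace_j G \<iota> \<alpha> k a = \<iota> k)"
      using trace_one_exists objs_nonempty by blast
  next
    assume "finite M \<and> (\<exists>a\<in>center. \<exists>k\<in>Ob. trace_j G \<iota> \<alpha> k a = \<iota> k)"
    then obtain a k where "finite M" "a \<in> center" "k \<in> Ob" "trace_j G \<iota> \<alpha> k a = \<iota> k"
      by blast
    then interpret trace_one_element G \<iota> \<alpha> a
      using trace_j_translate[OF assms(2)] by unfold_locales blast+
    show "separable_ext S skew_add mul (\<lambda>_. 0) (skew_one G \<iota>) (range emb)"
      by (rule separable)
  qed
qed

end
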